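(* Let $\alpha\in\Lambda$ and let $H_\alpha$ be the Hilbert space defined below. For each $j=1,\dots,d$ there is a unique bounded operator $\pi_\alpha(s_j)$ on $H_\alpha$ with $\pi_\alpha(s_j)e_\beta=e_{\sigma_j(\beta)}$ for all $\beta\sim\alpha$, and its adjoint satisfies \[ \pi_\alpha(s_j)^*e_\beta=\begin{cases}0,& \beta \text{ does not contain } j,\\ q(j,\beta)\,e_{\beta\setminus j},&\text{otherwise},\end{cases}\qquad \beta\sim\alpha. \] Moreover, the operators $\pi_\alpha(s_j)$ satisfy $\pi_\alpha(s_j)^*\pi_\alpha(s_j)=I$ and $\pi_\alpha(s_i)^*\pi_\alpha(s_j)=q_{ij}\pi_\alpha(s_j)\pi_\alpha(s_i)^*$ for $i\ne j$, hence define a $*$-representation $\pi_\alpha$ of $W$ on $H_\alpha$.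
   Context: Fix $d\ge 2$ and complex numbers $q_{ij}$, $1\le i\ne j\le d$, with $|q_{ij}|<1$ and $q_{ij}=\overline{q_{ji}}$. Let $W$ be the universal $C^*$-algebra generated by $s_1,\dots,s_d$ subject to $s_i^*s_i=I$ and $s_i^*s_j=q_{ij}s_js_i^*$ for $i\ne j$. Let $\Lambda_m=\{1,\dots,d\}^m$ ($\Lambda_0=\{\emptyset\}$), $\Lambda^0=\bigcup_m\Lambda_m$, $\Lambda=\{1,\dots,d\}^{\mathbb N}$; $s_\alpha=s_{\alpha_1}\cdots s_{\alpha_m}$, $s_\emptyset=I$. Shifts: $\sigma(\beta_1,\beta_2,\dots)=(\beta_2,\beta_3,\dots)$ and $\sigma_j(\beta_1,\beta_2,\dots)=(j,\beta_1,\beta_2,\dots)$. Infinite multiindices are equivalent, $\beta\sim\alpha$, if $\sigma^m(\beta)=\sigma^n(\alpha)$ for some $m,n\ge 0$. For an infinite $\beta$ containing $j$, write $\beta=(\beta' j\beta'')$ with $\beta'=(\beta'_1,\dots,\beta'_r)$ finite not containing $j$; then $q(j,\beta)=q_{j\beta'_1}\cdots q_{j\beta'_r}$ (empty product $=1$) and $\beta\setminus j=(\beta'\beta'')$. Fock representation: $\pi_F$ is the $*$-representation of $W$ on a Hilbert space $\mathcal F$ with unit vector $\Omega$, $\pi_F(s_j)^*\Omega=0$ for all $j$, such that $e_\gamma=\pi_F(s_\gamma)\Omega$, $\gamma\in\Lambda^0$, span a dense subspace. For $\gamma,\beta\in\Lambda_m$ let $q(\gamma,\beta)=\langle\pi_F(s_\gamma)^*\pi_F(s_\beta)\Omega,\Omega\rangle$,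 and for infinite $\gamma,\beta$ let $q(\gamma,\beta)=\lim_{m\to\infty}q((\gamma_1,\dots,\gamma_m),(\beta_1,\dots,\beta_m))$ (this limit exists). The space $H_\alpha$: for fixed $\alpha\in\Lambda$, let $\tilde H_\alpha$ be the vector space with basis the formal symbols $e_\beta$, $\beta\sim\alpha$, with the positive Hermitian form $(e_\beta,e_\gamma)=q(\gamma,\beta)$; $H_\alpha$ is the Hilbert space completion of $\tilde H_\alpha$ (after factoring out null vectors) with respect to this form. *)

theory Defs
  imports "HOL-Analysis.Analysis"
begin

text \<open>A complex inner product space: a real normed vector space carrying a compatible
complex scalar multiplication and a complex inner product, linear in the FIRST argument
(the convention of the paper: q(gamma,beta) = <s_gamma^* s_beta Omega, Omega> = <e_beta, e_gamma>),
whose norm is the one induced by the inner product.\<close>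

class complex_inner = real_normed_vector +
  fixes scaleC :: "complex \<Rightarrow> 'a \<Rightarrow> 'a"
    and cinner :: "'a \<Rightarrow> 'a \<Rightarrow> complex"
  assumes scaleC_add_right: "scaleC a (x + y) = scaleC a x + scaleC a y"
    and scaleC_add_left: "scaleC (a + b) x = scaleC a x + scaleC b x"
    and scaleC_scaleC: "scaleC a (scaleC b x) = scaleC (a * b) x"
    and scaleC_one: "scaleC 1 x = x"
    and scaleR_scaleC: "scaleR r x = scaleC (complex_of_real r) x"
    and cinner_add_left: "cinner (x + y) z = cinner x z + cinner y z"
    and cinner_scaleC_left: "cinner (scaleC a x) y = a * cinner x y"
    and cinner_commute: "cinner y x = cnj (cinner x y)"
    and cinner_norm: "cinner x x = complex_of_real ((norm x)\<^sup>2)"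

class chilbert = complex_inner + complete_space

definition bounded_clinear :: "('a::complex_inner \<Rightarrow> 'b::complex_inner) \<Rightarrow> bool" where
  "bounded_clinear T \<longleftrightarrow>
     (\<forall>x y. T (x + y) = T x + T y) \<and> (\<forall>c x. T (scaleC c x) = scaleC c (T x)) \<and>
     (\<exists>K. \<forall>x. norm (T x) \<le> norm x * K)"

definition cadjoint :: "('a::complex_inner \<Rightarrow> 'a) \<Rightarrow> ('a \<Rightarrow> 'a)" where
  "cadjoint T = (THE T'. \<forall>x y. cinner (T x) y = cinner x (T' y))"

definition cspan :: "'a::complex_inner set \<Rightarrow> 'a set" where
  "cspan S = {\<Sum>x\<in>F. scaleC (c x) x | F c. finite F \<and> F \<subseteq> S}"

text \<open>Finite multiindices are lists over {1..d}; infinite ones are sequences nat => nat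
with values in {1..d}.\<close>

definition Lam :: "nat \<Rightarrow> (nat \<Rightarrow> nat) set" where
  "Lam d = {\<beta>. \<forall>k. \<beta> k \<in> {1..d}}"

definition sigma :: "(nat \<Rightarrow> nat) \<Rightarrow> (nat \<Rightarrow> nat)" where
  "sigma \<beta> = (\<lambda>k. \<beta> (Suc k))"

definition sigma_j :: "nat \<Rightarrow> (nat \<Rightarrow> nat) \<Rightarrow> (nat \<Rightarrow> nat)" where
  "sigma_j j \<beta> = (\<lambda>k. case k of 0 \<Rightarrow> j | Suc k' \<Rightarrow> \<beta> k')"

definition mequiv :: "(nat \<Rightarrow> nat) \<Rightarrow> (nat \<Rightarrow> nat) \<Rightarrow> bool" where
  "mequiv \<beta> \<alpha> \<longleftrightarrow> (\<exists>m n. (sigma ^^ m) \<beta> = (sigma ^^ n) \<alpha>)"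

definition equiv_class :: "nat \<Rightarrow> (nat \<Rightarrow> nat) \<Rightarrow> (nat \<Rightarrow> nat) set" where
  "equiv_class d \<alpha> = {\<beta> \<in> Lam d. mequiv \<beta> \<alpha>}"

definition contains :: "nat \<Rightarrow> (nat \<Rightarrow> nat) \<Rightarrow> bool" where
  "contains j \<beta> \<longleftrightarrow> (\<exists>k. \<beta> k = j)"

text \<open>Position r of the first occurrence of j in beta; beta = (beta' j beta'') with
beta' = (beta 0, ..., beta (r-1)).\<close>
definition first_pos :: "nat \<Rightarrow> (nat \<Rightarrow> nat) \<Rightarrow> nat" where
  "first_pos j \<beta> = (LEAST k. \<beta> k = j)"

definition qj :: "(nat \<Rightarrow> nat \<Rightarrow> complex) \<Rightarrow> nat \<Rightarrow> (nat \<Rightarrow> nat) \<Rightarrow> complex" where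
  "qj q j \<beta> = (\<Prod>k<first_pos j \<beta>. q j (\<beta> k))"

definition remove_j :: "nat \<Rightarrow> (nat \<Rightarrow> nat) \<Rightarrow> (nat \<Rightarrow> nat)" where
  "remove_j j \<beta> = (\<lambda>k. if k < first_pos j \<beta> then \<beta> k else \<beta> (Suc k))"

text \<open>A *-representation of W on a Hilbert space is (by the universal property of W)
the same as a family S_1..S_d of bounded operators satisfying the defining relations.\<close>
definition W_rep :: "nat \<Rightarrow> (nat \<Rightarrow> nat \<Rightarrow> complex) \<Rightarrow> (nat \<Rightarrow> 'a::chilbert \<Rightarrow> 'a) \<Rightarrow> bool" where
  "W_rep d q S \<longleftrightarrow>
     (\<forall>j\<in>{1..d}. bounded_clinear (S j)) \<and>
     (\<forall>j\<in>{1..d}. cadjoint (S j) \<circ> S j = id) \<and>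
     (\<forall>i\<in>{1..d}. \<forall>j\<in>{1..d}. i \<noteq> j \<longrightarrow>
        cadjoint (S i) \<circ> S j = (\<lambda>x. scaleC (q i j) (S j (cadjoint (S i) x))))"

definition word_op :: "(nat \<Rightarrow> 'a \<Rightarrow> 'a) \<Rightarrow> nat list \<Rightarrow> 'a \<Rightarrow> 'a" where
  "word_op S w x = foldr S w x"

definition word_adj :: "(nat \<Rightarrow> 'a::complex_inner \<Rightarrow> 'a) \<Rightarrow> nat list \<Rightarrow> 'a \<Rightarrow> 'a" where
  "word_adj S w x = fold (\<lambda>j. cadjoint (S j)) w x"

definition fock_rep :: "nat \<Rightarrow> (nat \<Rightarrow> nat \<Rightarrow> complex) \<Rightarrow> (nat \<Rightarrow> 'a::chilbert \<Rightarrow> 'a) \<Rightarrow> 'a \<Rightarrow> bool" where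
  "fock_rep d q S \<Omega> \<longleftrightarrow>
     W_rep d q S \<and> norm \<Omega> = 1 \<and> (\<forall>j\<in>{1..d}. cadjoint (S j) \<Omega> = 0) \<and>
     closure (cspan {word_op S w \<Omega> | w. set w \<subseteq> {1..d}}) = UNIV"

definition qfin :: "(nat \<Rightarrow> 'a::chilbert \<Rightarrow> 'a) \<Rightarrow> 'a \<Rightarrow> nat list \<Rightarrow> nat list \<Rightarrow> complex" where
  "qfin S \<Omega> \<gamma> \<beta> = cinner (word_adj S \<gamma> (word_op S \<beta> \<Omega>)) \<Omega>"

definition qinf :: "(nat \<Rightarrow> 'a::chilbert \<Rightarrow> 'a) \<Rightarrow> 'a \<Rightarrow> (nat \<Rightarrow> nat) \<Rightarrow> (nat \<Rightarrow> nat) \<Rightarrow> complex" where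
  "qinf S \<Omega> \<gamma> \<beta> = lim (\<lambda>m. qfin S \<Omega> (map \<gamma> [0..<m]) (map \<beta> [0..<m]))"

text \<open>(H, e) is (a model of) H_alpha: e maps each beta ~ alpha to the class of the formal
basis vector e_beta in the completion. This is characterised up to unitary isomorphism by:
the Hermitian form is preserved, (e_beta, e_gamma) = q(gamma, beta), and the images span a
dense subspace of the complete space H.\<close>
definition is_H_alpha :: "nat \<Rightarrow> (nat \<Rightarrow> 'f::chilbert \<Rightarrow> 'f) \<Rightarrow> 'f \<Rightarrow> (nat \<Rightarrow> nat)
    \<Rightarrow> ((nat \<Rightarrow> nat) \<Rightarrow> 'h::chilbert) \<Rightarrow> bool" where
  "is_H_alpha d S \<Omega> \<alpha> e \<longleftrightarrow>
     (\<forall>\<beta>\<in>equiv_class d \<alpha>. \<forall>\<gamma>\<in>equiv_class d \<alpha>. cinner (e \<beta>) (e \<gamma>) = qinf S \<Omega> \<gamma> \<beta>) \<and>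
     closure (cspan (e ` equiv_class d \<alpha>)) = UNIV"

end

theory Submission
  imports Defs
begin

text \<open>The Fock form \<open>q(\<gamma>, \<beta>)\<close> is the limit of the vacuum coefficients of the prefixes,
  \<open>\<langle>s_{\<gamma>|m}\<^sup>* s_{\<beta>|m} \<Omega>, \<Omega>\<rangle>\<close>, which the relations of \<open>W\<close> compute letter by letter; as
  \<open>|q_ij| < 1\<close> these limits exist. Prepending \<open>j\<close> to both multiindices leaves the form
  unchanged, so \<open>e_\<beta> \<mapsto> e_{\<sigma>_j \<beta>}\<close> is isometric on the dense span of the basis and extends to
  a bounded operator. Its adjoint exists by the Riesz representation theorem and is identified
  on the basis through
  \<open>q(\<sigma>_j \<gamma>, \<beta>) = q(j, \<beta>) q(\<gamma>, \<beta>\<setminus>j)\<close>, or 0 if \<open>\<beta>\<close> does not contain \<open>j\<close>. The relations of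
  \<open>W\<close> then only need to be checked on the basis vectors.\<close>

lemma additive_scaleC_left: "Modules.additive (\<lambda>a. scaleC a (x::'a::complex_inner))"
  by (rule Modules.additive.intro) (rule scaleC_add_left)

lemma additive_scaleC_right: "Modules.additive (scaleC a :: 'a::complex_inner \<Rightarrow> 'a)"
  by (rule Modules.additive.intro) (rule scaleC_add_right)

lemma cinner_add_right: "cinner x (y + z) = cinner x y + cinner x (z::'a::complex_inner)"
  by (metis cinner_add_left cinner_commute complex_cnj_add)

lemma cinner_scaleC_right: "cinner x (scaleC a y) = cnj a * cinner x (y::'a::complex_inner)"
  by (metis cinner_scaleC_left cinner_commute complex_cnj_mult)

lemma additive_cinner_left: "Modules.additive (\<lambda>x::'a::complex_inner. cinner x y)"
  by (rule Modules.additive.intro) (rule cinner_add_left)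

lemma additive_cinner_right: "Modules.additive (cinner (x::'a::complex_inner))"
  by (rule Modules.additive.intro) (rule cinner_add_right)

lemmas scaleC_zero_left [simp] = Modules.additive.zero[OF additive_scaleC_left]
  and scaleC_minus_left = Modules.additive.minus[OF additive_scaleC_left]
  and scaleC_diff_left = Modules.additive.diff[OF additive_scaleC_left]
  and scaleC_zero_right [simp] = Modules.additive.zero[OF additive_scaleC_right]
  and scaleC_sum_right = Modules.additive.sum[OF additive_scaleC_right]
  and cinner_zero_left [simp] = Modules.additive.zero[OF additive_cinner_left]
  and cinner_diff_left = Modules.additive.diff[OF additive_cinner_left]
  and cinner_sum_left = Modules.additive.sum[OF additive_cinner_left]
  and cinner_zero_right [simp] = Modules.additive.zero[OF additive_cinner_right]
  and cinner_diff_right = Modules.additive.diff[OF additive_cinner_right]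
  and cinner_sum_right = Modules.additive.sum[OF additive_cinner_right]

lemma cinner_self_eq_0_iff: "cinner x x = 0 \<longleftrightarrow> x = (0::'a::complex_inner)"
  by (simp add: cinner_norm)

lemma scaleC_minus1_left: "scaleC (-1) x = - (x::'a::complex_inner)"
  by (simp add: scaleC_minus_left scaleC_one)

lemma norm_scaleC: "norm (scaleC a x) = cmod a * norm (x::'a::complex_inner)"
proof -
  have "complex_of_real ((norm (scaleC a x))\<^sup>2) = cinner (scaleC a x) (scaleC a x)"
    by (rule cinner_norm[symmetric])
  also have "\<dots> = (a * cnj a) * cinner x x"
    by (simp add: cinner_scaleC_left cinner_scaleC_right mult.assoc)
  also have "\<dots> = complex_of_real ((cmod a * norm x)\<^sup>2)"
    by (simp only: complex_norm_square cinner_norm of_real_mult power_mult_distrib)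
  finally show ?thesis
    by (simp only: of_real_eq_iff power2_eq_iff_nonneg norm_ge_zero mult_nonneg_nonneg)
qed

lemma norm_diff_projection_squared:
  fixes x y :: "'a::complex_inner"
  assumes "y \<noteq> 0"
  shows "(norm (x - scaleC (cinner x y / complex_of_real ((norm y)\<^sup>2)) y))\<^sup>2
         = (norm x)\<^sup>2 - (cmod (cinner x y))\<^sup>2 / (norm y)\<^sup>2"
proof -
  define c where "c = cinner x y"
  define n where "n = (norm y)\<^sup>2"
  have n0: "n \<noteq> 0" using assms by (simp add: n_def)
  have "complex_of_real ((norm (x - scaleC (c / complex_of_real n) y))\<^sup>2)
      = cinner (x - scaleC (c / complex_of_real n) y) (x - scaleC (c / complex_of_real n) y)"
    by (rule cinner_norm[symmetric])
  also have "\<dots> = complex_of_real ((norm x)\<^sup>2) - cnj c / complex_of_real n * c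
       - c / complex_of_real n * cnj c
       + c / complex_of_real n * (cnj c / complex_of_real n * complex_of_real n)"
    by (simp add: cinner_diff_left cinner_diff_right cinner_scaleC_left cinner_scaleC_right
        cinner_norm[of x] cinner_norm[of y] c_def[symmetric] cinner_commute[of y x] n_def)
  also have "\<dots> = complex_of_real ((norm x)\<^sup>2) - c * cnj c / complex_of_real n"
    using n0 by (simp add: field_simps)
  also have "\<dots> = complex_of_real ((norm x)\<^sup>2 - (cmod c)\<^sup>2 / n)"
    by (simp add: complex_norm_square[symmetric])
  finally show ?thesis
    unfolding c_def n_def of_real_eq_iff .
qed

lemma cinner_Cauchy_Schwarz: "cmod (cinner x y) \<le> norm x * norm (y::'a::complex_inner)"
proof (cases "y = 0")
  case False
  have "0 \<le> (norm x)\<^sup>2 - (cmod (cinner x y))\<^sup>2 / (norm y)\<^sup>2"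
    using norm_diff_projection_squared[OF False, of x] by (metis zero_le_power2)
  then have "(cmod (cinner x y))\<^sup>2 \<le> (norm x * norm y)\<^sup>2"
    using False by (simp add: divide_le_eq power_mult_distrib)
  then show ?thesis
    by (simp add: power2_le_iff_abs_le)
qed simp

lemma parallelogram_law:
  "(norm (u + v))\<^sup>2 + (norm (u - v))\<^sup>2 = 2 * (norm u)\<^sup>2 + 2 * (norm (v::'a::complex_inner))\<^sup>2"
proof -
  have "complex_of_real ((norm (u + v))\<^sup>2 + (norm (u - v))\<^sup>2)
      = cinner (u + v) (u + v) + cinner (u - v) (u - v)"
    by (simp only: of_real_add cinner_norm)
  also have "\<dots> = 2 * cinner u u + 2 * cinner v v"
    by (simp add: cinner_add_left cinner_add_right cinner_diff_left cinner_diff_right algebra_simps)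
  also have "\<dots> = complex_of_real (2 * (norm u)\<^sup>2 + 2 * (norm v)\<^sup>2)"
    by (simp only: of_real_add of_real_mult cinner_norm of_real_numeral)
  finally show ?thesis
    by (simp only: of_real_eq_iff)
qed

lemma bounded_bilinear_cinner: "bounded_bilinear (cinner :: 'a::complex_inner \<Rightarrow> 'a \<Rightarrow> complex)"
proof
  show "\<exists>K. \<forall>a b. norm (cinner a b) \<le> norm (a::'a) * norm b * K"
    by (rule exI[of _ 1]) (simp add: cinner_Cauchy_Schwarz)
qed (simp_all add: cinner_add_left cinner_add_right scaleR_scaleC cinner_scaleC_left
       cinner_scaleC_right scaleR_conv_of_real)

lemma cinner_eqI_right: "(\<And>x. cinner x a = cinner x b) \<Longrightarrow> a = (b::'a::complex_inner)"
  by (metis cinner_diff_right cinner_self_eq_0_iff eq_iff_diff_eq_0)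

lemma bounded_clinear_add: "bounded_clinear T \<Longrightarrow> T (x + y) = T x + T y"
  unfolding bounded_clinear_def by blast

lemma bounded_clinear_scaleC: "bounded_clinear T \<Longrightarrow> T (scaleC c x) = scaleC c (T x)"
  unfolding bounded_clinear_def by blast

lemma bounded_clinear_additive: "bounded_clinear T \<Longrightarrow> Modules.additive T"
  by (rule Modules.additive.intro) (rule bounded_clinear_add)

lemmas bounded_clinear_zero = Modules.additive.zero[OF bounded_clinear_additive]

lemma bounded_clinear_nonneg_bound:
  assumes "bounded_clinear T"
  obtains K where "K \<ge> 0" "\<And>x. norm (T x) \<le> norm x * K"
proof -
  obtain K where K: "\<And>x. norm (T x) \<le> norm x * K"
    using assms unfolding bounded_clinear_def by blast
  have "norm (T x) \<le> norm x * max K 0" for x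
    by (rule order_trans[OF K]) (simp add: mult_left_mono)
  then show ?thesis
    using that[of "max K 0"] by simp
qed

lemma bounded_linear_if_bounded_clinear: "bounded_clinear T \<Longrightarrow> bounded_linear T"
  unfolding bounded_clinear_def by (auto intro!: bounded_linear_intro simp: scaleR_scaleC)

lemma bounded_clinear_id: "bounded_clinear (id :: 'a::complex_inner \<Rightarrow> 'a)"
  unfolding bounded_clinear_def by (auto intro: exI[of _ 1])

lemma bounded_clinear_compose:
  assumes A: "bounded_clinear A" and B: "bounded_clinear B"
  shows "bounded_clinear (A \<circ> B)"
proof -
  obtain KA where KA0: "KA \<ge> 0" and KA: "\<And>x. norm (A x) \<le> norm x * KA"
    using bounded_clinear_nonneg_bound[OF A] by blast
  obtain KB where KB: "\<And>x. norm (B x) \<le> norm x * KB"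
    using bounded_clinear_nonneg_bound[OF B] by blast
  have "norm (A (B x)) \<le> norm x * (KB * KA)" for x
    using order_trans[OF KA mult_right_mono[OF KB KA0]] by (simp add: mult.assoc)
  then show ?thesis
    using A B unfolding bounded_clinear_def by auto
qed

lemma bounded_clinear_scaleC_compose:
  assumes T: "bounded_clinear T"
  shows "bounded_clinear (\<lambda>x. scaleC c (T x))"
proof -
  obtain K where K: "\<And>x. norm (T x) \<le> norm x * K"
    using bounded_clinear_nonneg_bound[OF T] by blast
  have "norm (scaleC c (T x)) \<le> norm x * (cmod c * K)" for x
    using mult_left_mono[OF K norm_ge_zero, of c x] by (simp add: norm_scaleC ac_simps)
  then show ?thesis
    unfolding bounded_clinear_def
    by (intro conjI allI exI[of _ "cmod c * K"])
      (simp_all add: bounded_clinear_add[OF T] bounded_clinear_scaleC[OF T] scaleC_add_right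
        scaleC_scaleC mult.commute)
qed

section \<open>The Riesz representation theorem and adjoints\<close>

lemma minimizing_sequence_Cauchy:
  fixes N :: "'a::complex_inner set"
  assumes "convex N" and kN: "\<And>n. k n \<in> N"
    and kd: "\<And>n. dist x (k n) < infdist x N + inverse (real (Suc n))"
  shows "Cauchy k"
proof (rule metric_CauchyI)
  define \<delta> where "\<delta> = infdist x N"
  define \<epsilon> where "\<epsilon> n = inverse (real (Suc n))" for n
  have \<delta>0: "0 \<le> \<delta>"
    by (simp add: \<delta>_def infdist_nonneg)
  have \<epsilon>0: "0 < \<epsilon> n" and \<epsilon>1: "\<epsilon> n \<le> 1" for n
    by (simp_all add: \<epsilon>_def inverse_le_1_iff)
  \<comment> \<open>Parallelogram law: the midpoint of \<open>k m\<close> and \<open>k n\<close> is not closer to \<open>x\<close> than \<open>\<delta>\<close>.\<close>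
  have distb: "(dist (k m) (k n))\<^sup>2 \<le> 2 * (\<delta> + \<epsilon> m)\<^sup>2 + 2 * (\<delta> + \<epsilon> n)\<^sup>2 - 4 * \<delta>\<^sup>2" for m n
  proof -
    define mid where "mid = scaleR (1/2) (k m) + scaleR (1/2) (k n)"
    have "mid \<in> N"
      using convexD[OF assms(1) kN kN] by (simp add: mid_def)
    moreover have "(x - k m) + (x - k n) = scaleR 2 (x - mid)"
      by (simp add: mid_def algebra_simps scaleR_2)
    ultimately have "2 * \<delta> \<le> norm ((x - k m) + (x - k n))"
      using infdist_le[of mid N x] by (simp add: \<delta>_def dist_norm)
    then have "4 * \<delta>\<^sup>2 \<le> (norm ((x - k m) + (x - k n)))\<^sup>2"
      using \<delta>0 power_mono[of "2 * \<delta>" _ 2] by (simp add: power_mult_distrib)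
    moreover have "(norm (x - k m))\<^sup>2 \<le> (\<delta> + \<epsilon> m)\<^sup>2" "(norm (x - k n))\<^sup>2 \<le> (\<delta> + \<epsilon> n)\<^sup>2"
      using kd[of m] kd[of n] by (auto intro!: power_mono simp: dist_norm \<delta>_def \<epsilon>_def)
    ultimately show ?thesis
      using parallelogram_law[of "x - k m" "x - k n"] by (simp add: dist_norm norm_minus_commute)
  qed
  fix e :: real
  assume e: "0 < e"
  obtain M where M: "inverse (real (Suc M)) < e\<^sup>2 / (8 * \<delta> + 4)"
    using reals_Archimedean[of "e\<^sup>2 / (8 * \<delta> + 4)"] e \<delta>0 by auto
  have M': "(8 * \<delta> + 4) * \<epsilon> M < e\<^sup>2"
    using M \<delta>0 by (simp add: \<epsilon>_def field_simps)
  have "dist (k m) (k n) < e" if "M \<le> m" "M \<le> n" for m n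
  proof -
    have em: "\<epsilon> m \<le> \<epsilon> M" "\<epsilon> n \<le> \<epsilon> M"
      using that by (simp_all add: \<epsilon>_def)
    have sq: "(\<epsilon> m)\<^sup>2 \<le> \<epsilon> m" "(\<epsilon> n)\<^sup>2 \<le> \<epsilon> n"
      using \<epsilon>0 \<epsilon>1 by (simp_all add: power2_eq_square mult_le_cancel_right1)
    have "\<delta> * \<epsilon> m \<le> \<delta> * \<epsilon> M" "\<delta> * \<epsilon> n \<le> \<delta> * \<epsilon> M"
      using em \<delta>0 by (simp_all add: mult_left_mono)
    then have "(dist (k m) (k n))\<^sup>2 < e\<^sup>2"
      using distb[of m n] sq em M' by (simp add: power2_sum algebra_simps)
    then show ?thesis
      using e by (simp add: power_less_imp_less_base)
  qed
  then show "\<exists>M. \<forall>m\<ge>M. \<forall>n\<ge>M. dist (k m) (k n) < e"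
    by blast
qed

lemma nearest_point_exists:
  fixes N :: "'a::chilbert set"
  assumes "closed N" "convex N" "N \<noteq> {}"
  obtains z where "z \<in> N" "\<And>w. w \<in> N \<Longrightarrow> dist x z \<le> dist x w"
proof -
  have "\<exists>w. w \<in> N \<and> dist x w < infdist x N + inverse (real (Suc n))" for n
  proof -
    have "Inf (dist x ` N) < infdist x N + inverse (real (Suc n))"
      using assms(3) by (simp add: infdist_notempty)
    then show ?thesis
      using cInf_lessD[of "dist x ` N"] assms(3) by auto
  qed
  then obtain k where kN: "\<And>n. k n \<in> N"
    and kd: "\<And>n. dist x (k n) < infdist x N + inverse (real (Suc n))"
    by metis
  obtain z where lim: "k \<longlonglongrightarrow> z"
    using minimizing_sequence_Cauchy[OF assms(2) kN kd] Cauchy_convergent_iff convergent_def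
    by blast
  have "z \<in> N"
    by (rule closed_sequentially[OF assms(1) kN lim])
  moreover have "dist x z \<le> infdist x N"
  proof (rule LIMSEQ_le)
    show "(\<lambda>n. dist x (k n)) \<longlonglongrightarrow> dist x z"
      by (intro tendsto_intros lim)
    show "(\<lambda>n. infdist x N + inverse (real (Suc n))) \<longlonglongrightarrow> infdist x N"
      using tendsto_add[OF tendsto_const LIMSEQ_inverse_real_of_nat] by simp
  qed (use kd less_imp_le in blast)
  ultimately show ?thesis
    using that infdist_le by (metis order_trans)
qed

lemma nearest_point_orthogonal:
  fixes N :: "'a::complex_inner set"
  assumes add: "\<And>a b. a \<in> N \<Longrightarrow> b \<in> N \<Longrightarrow> a + b \<in> N"
    and scale: "\<And>c a. a \<in> N \<Longrightarrow> scaleC c a \<in> N"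
    and z: "z \<in> N" and nearest: "\<And>w. w \<in> N \<Longrightarrow> dist x z \<le> dist x w"
    and w: "w \<in> N"
  shows "cinner (x - z) w = 0"
proof (rule ccontr)
  assume ne: "cinner (x - z) w \<noteq> 0"
  then have w0: "w \<noteq> 0" by auto
  define t where "t = cinner (x - z) w / complex_of_real ((norm w)\<^sup>2)"
  have "(norm (x - z - scaleC t w))\<^sup>2 < (norm (x - z))\<^sup>2"
    using norm_diff_projection_squared[OF w0, of "x - z"] ne w0 by (simp add: t_def)
  then have "norm (x - z - scaleC t w) < dist x z"
    by (simp add: dist_norm power_less_imp_less_base)
  moreover have "dist x z \<le> norm (x - z - scaleC t w)"
    using nearest[OF add[OF z scale[OF w]]] by (simp add: dist_norm algebra_simps)
  ultimately show False
    by simp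
qed

lemma Riesz_representation:
  fixes f :: "'a::chilbert \<Rightarrow> complex"
  assumes add: "\<And>x y. f (x + y) = f x + f y"
    and hom: "\<And>c x. f (scaleC c x) = c * f x"
    and bnd: "\<And>x. norm (f x) \<le> norm x * K"
  obtains y where "\<And>x. f x = cinner x y"
proof (cases "\<forall>x. f x = 0")
  case True
  then show ?thesis using that[of 0] by simp
next
  case False
  then obtain x1 where x1: "f x1 \<noteq> 0" by auto
  define x0 where "x0 = scaleC (1 / f x1) x1"
  have fx0: "f x0 = 1" using x1 by (simp add: x0_def hom)
  have f0: "f 0 = 0" using hom[of 0 0] by simp
  have fdiff: "f (x - y) = f x - f y" for x y
    by (metis add diff_add_cancel eq_diff_eq)
  have "bounded_linear f"
    by (rule bounded_linear_intro[where K=K])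
      (simp_all add: add bnd scaleR_scaleC hom scaleR_conv_of_real)
  then have closed_kernel: "closed {x. f x = 0}"
    by (rule closed_Collect_eq[OF linear_continuous_on continuous_on_const])
  have convex_kernel: "convex {x. f x = 0}"
    by (rule convexI) (simp add: add scaleR_scaleC hom)
  have "{x. f x = 0} \<noteq> {}"
    using f0 by blast
  then obtain k0 where k0: "k0 \<in> {x. f x = 0}"
    and nearest: "\<And>w. w \<in> {x. f x = 0} \<Longrightarrow> dist x0 k0 \<le> dist x0 w"
    by (rule nearest_point_exists[OF closed_kernel convex_kernel, where x=x0]) blast
  define z where "z = x0 - k0"
  have fz: "f z = 1" using k0 fx0 by (simp add: z_def fdiff)
  have ortho: "cinner z w = 0" if "f w = 0" for w
    unfolding z_def
  proof (rule nearest_point_orthogonal[OF _ _ k0 nearest])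
    show "a + b \<in> {x. f x = 0}" if "a \<in> {x. f x = 0}" "b \<in> {x. f x = 0}" for a b
      using that by (simp add: add)
    show "scaleC c a \<in> {x. f x = 0}" if "a \<in> {x. f x = 0}" for c a
      using that by (simp add: hom)
  qed (use that in simp_all)
  have "cinner x z = f x * complex_of_real ((norm z)\<^sup>2)" for x
  proof -
    have "cinner z (x - scaleC (f x) z) = 0"
      by (rule ortho) (simp add: fdiff hom fz)
    then have "cinner (x - scaleC (f x) z) z = 0"
      by (metis cinner_commute complex_cnj_zero)
    then show ?thesis
      by (simp add: cinner_diff_left cinner_scaleC_left cinner_norm)
  qed
  moreover have "z \<noteq> 0" using fz f0 by auto
  ultimately show ?thesis
    using that[of "scaleC (complex_of_real (1 / (norm z)\<^sup>2)) z"]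
    by (simp add: cinner_scaleC_right)
qed

lemma cadjoint_eqI:
  fixes T :: "'a::complex_inner \<Rightarrow> 'a"
  assumes "\<And>x y. cinner (T x) y = cinner x (T' y)"
  shows "cadjoint T = T'"
  unfolding cadjoint_def
proof (rule the_equality)
  fix T2 assume T2: "\<forall>x y. cinner (T x) y = cinner x (T2 y)"
  show "T2 = T'"
  proof (rule ext, rule cinner_eqI_right)
    show "cinner x (T2 y) = cinner x (T' y)" for x y
      by (simp add: T2[rule_format, symmetric] assms)
  qed
qed (use assms in blast)

lemma cinner_cadjoint:
  fixes T :: "'a::chilbert \<Rightarrow> 'a"
  assumes T: "bounded_clinear T"
  shows "cinner (T x) y = cinner x (cadjoint T y)"
proof -
  obtain K where K: "\<And>x. norm (T x) \<le> norm x * K"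
    using bounded_clinear_nonneg_bound[OF T] by blast
  have "\<exists>y'. \<forall>x. cinner (T x) y = cinner x y'" for y
  proof (rule Riesz_representation[of "\<lambda>x. cinner (T x) y" "K * norm y"])
    show "cmod (cinner (T x) y) \<le> norm x * (K * norm y)" for x
      using order_trans[OF cinner_Cauchy_Schwarz mult_right_mono[OF K norm_ge_zero]]
      by (simp add: mult.assoc)
  qed (auto simp: bounded_clinear_add[OF T] bounded_clinear_scaleC[OF T] cinner_add_left
      cinner_scaleC_left)
  then obtain T' where T': "\<And>x y. cinner (T x) y = cinner x (T' y)"
    by metis
  have "cadjoint T = T'"
    by (rule cadjoint_eqI) (rule T')
  then show ?thesis
    by (simp add: T')
qed

lemma bounded_clinear_cadjoint:
  fixes T :: "'a::chilbert \<Rightarrow> 'a"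
  assumes T: "bounded_clinear T"
  shows "bounded_clinear (cadjoint T)"
proof -
  let ?A = "cadjoint T"
  obtain K where K0: "K \<ge> 0" and K: "\<And>x. norm (T x) \<le> norm x * K"
    using bounded_clinear_nonneg_bound[OF T] by blast
  have add: "?A (y + z) = ?A y + ?A z" for y z
    by (rule cinner_eqI_right) (simp add: cinner_cadjoint[OF T, symmetric] cinner_add_right)
  have scale: "?A (scaleC c y) = scaleC c (?A y)" for c y
    by (rule cinner_eqI_right) (simp add: cinner_cadjoint[OF T, symmetric] cinner_scaleC_right)
  have "norm (?A y) \<le> norm y * K" for y
  proof (cases "?A y = 0")
    case False
    have "cinner (T (?A y)) y = complex_of_real ((norm (?A y))\<^sup>2)"
      by (simp only: cinner_norm[symmetric] cinner_cadjoint[OF T])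
    then have "(norm (?A y))\<^sup>2 = cmod (cinner (T (?A y)) y)"
      by (simp add: norm_power)
    also have "\<dots> \<le> norm (?A y) * K * norm y"
      by (rule order_trans[OF cinner_Cauchy_Schwarz mult_right_mono[OF K norm_ge_zero]])
    finally show ?thesis
      using False by (simp add: power2_eq_square algebra_simps mult_le_cancel_left)
  qed (use K0 in simp)
  then show ?thesis
    unfolding bounded_clinear_def using add scale by blast
qed

lemma cspanI: "finite F \<Longrightarrow> F \<subseteq> S \<Longrightarrow> (\<Sum>x\<in>F. scaleC (c x) x) \<in> cspan S"
  unfolding cspan_def by blast

lemma cspanE:
  assumes "v \<in> cspan S"
  obtains F c where "finite F" "F \<subseteq> S" "v = (\<Sum>x\<in>F. scaleC (c x) x)"
  using assms unfolding cspan_def by blast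

lemma sum_scaleC_extend:
  assumes "finite H" "F \<subseteq> H"
  shows "(\<Sum>a\<in>F. scaleC (c a) (u a)) = (\<Sum>a\<in>H. scaleC (if a \<in> F then c a else 0) (u a::'a::complex_inner))"
  by (rule sum.mono_neutral_cong_left) (use assms in auto)

lemma sum_scaleC_union:
  assumes "finite F" "finite G"
  shows "(\<Sum>a\<in>F. scaleC (c a) (v a)) + (\<Sum>a\<in>G. scaleC (d a) (v a))
    = (\<Sum>a\<in>F \<union> G. scaleC ((if a \<in> F then c a else 0) + (if a \<in> G then d a else 0))
        (v a::'a::complex_inner))"
  using assms by (simp add: sum_scaleC_extend[of "F \<union> G" F] sum_scaleC_extend[of "F \<union> G" G]
      sum.distrib[symmetric] scaleC_add_left)

lemma cspan_subset:
  assumes "X \<subseteq> A" "0 \<in> A" and add: "\<And>a b. a \<in> A \<Longrightarrow> b \<in> A \<Longrightarrow> a + b \<in> A"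
    and scale: "\<And>c a. a \<in> A \<Longrightarrow> scaleC c a \<in> A"
  shows "cspan X \<subseteq> A"
proof
  fix v assume "v \<in> cspan X"
  then obtain F c where F: "finite F" "F \<subseteq> X" and v: "v = (\<Sum>x\<in>F. scaleC (c x) x)"
    by (rule cspanE)
  from F have "(\<Sum>x\<in>F. scaleC (c x) x) \<in> A"
  proof (induction F rule: finite_induct)
    case (insert x F)
    then show ?case
      using \<open>X \<subseteq> A\<close> by (simp add: add scale subset_eq)
  qed (simp add: \<open>0 \<in> A\<close>)
  then show "v \<in> A" by (simp add: v)
qed

lemma
  shows cspan_add: "a \<in> cspan S \<Longrightarrow> b \<in> cspan S \<Longrightarrow> a + b \<in> cspan S"
    and cspan_scaleC: "a \<in> cspan S \<Longrightarrow> scaleC k a \<in> cspan S"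
    and cspan_superset: "x \<in> S \<Longrightarrow> x \<in> cspan S"
proof -
  show "x \<in> S \<Longrightarrow> x \<in> cspan S"
    using cspanI[of "{x}" S "\<lambda>_. 1"] by (simp add: scaleC_one)
  assume a: "a \<in> cspan S"
  then obtain F c where F: "finite F" "F \<subseteq> S" "a = (\<Sum>x\<in>F. scaleC (c x) x)"
    by (rule cspanE)
  show "scaleC k a \<in> cspan S"
    using cspanI[OF F(1,2), of "\<lambda>x. k * c x"] by (simp add: F(3) scaleC_sum_right scaleC_scaleC)
  assume "b \<in> cspan S"
  then obtain G d where G: "finite G" "G \<subseteq> S" "b = (\<Sum>x\<in>G. scaleC (d x) x)"
    by (rule cspanE)
  show "a + b \<in> cspan S"
    using cspanI[of "F \<union> G" S] sum_scaleC_union[OF F(1) G(1), of c "\<lambda>x. x" d] F G by simp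
qed

lemma cspan_imageE:
  assumes "v \<in> cspan (u ` I)"
  obtains F c where "finite F" "F \<subseteq> I" "v = (\<Sum>a\<in>F. scaleC (c a) (u a))"
proof -
  obtain F' c where F': "finite F'" "F' \<subseteq> u ` I" "v = (\<Sum>x\<in>F'. scaleC (c x) x)"
    using assms by (rule cspanE)
  then obtain F where F: "F \<subseteq> I" "inj_on u F" "F' = u ` F"
    unfolding subset_image_inj by blast
  have "finite F"
    using F'(1) F(2,3) by (simp add: finite_image_iff)
  moreover have "v = (\<Sum>a\<in>F. scaleC (c (u a)) (u a))"
    using F'(3) F(2,3) by (simp add: sum.reindex)
  ultimately show ?thesis
    using that[OF _ F(1), where c="\<lambda>a. c (u a)"] by simp
qed

lemma dense_cspan_subspace_UNIV:
  assumes dense: "closure (cspan X) = UNIV" and "closed A" "X \<subseteq> A" "0 \<in> A"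
    and "\<And>a b. a \<in> A \<Longrightarrow> b \<in> A \<Longrightarrow> a + b \<in> A" "\<And>c a. a \<in> A \<Longrightarrow> scaleC c a \<in> A"
  shows "A = UNIV"
proof -
  have "cspan X \<subseteq> A"
    by (rule cspan_subset) fact+
  then have "closure (cspan X) \<subseteq> A"
    using closure_minimal \<open>closed A\<close> by blast
  then show ?thesis
    using dense by blast
qed

lemma bounded_clinear_eq_on_dense:
  assumes L1: "bounded_clinear L1" and L2: "bounded_clinear L2"
    and dense: "closure (cspan X) = UNIV" and eq: "\<And>x. x \<in> X \<Longrightarrow> L1 x = L2 x"
  shows "L1 = L2"
proof -
  have "closed {x. L1 x = L2 x}"
    using L1 L2 by (intro closed_Collect_eq linear_continuous_on bounded_linear_if_bounded_clinear)
  then have "{x. L1 x = L2 x} = UNIV"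
    by (rule dense_cspan_subspace_UNIV[OF dense])
      (use eq in \<open>simp_all add: subset_eq bounded_clinear_zero[OF L1] bounded_clinear_zero[OF L2]
        bounded_clinear_add[OF L1] bounded_clinear_add[OF L2] bounded_clinear_scaleC[OF L1]
        bounded_clinear_scaleC[OF L2]\<close>)
  then show ?thesis by auto
qed

lemma cinner_eq_on_dense:
  fixes a b :: "'a::complex_inner"
  assumes dense: "closure (cspan X) = UNIV" and eq: "\<And>x. x \<in> X \<Longrightarrow> cinner x a = cinner x b"
  shows "a = b"
proof -
  have "closed {x. cinner x a = cinner x b}"
    by (intro closed_Collect_eq linear_continuous_on
        bounded_bilinear.bounded_linear_left[OF bounded_bilinear_cinner])
  then have "{x. cinner x a = cinner x b} = UNIV"
    by (rule dense_cspan_subspace_UNIV[OF dense])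
      (use eq in \<open>simp_all add: subset_eq cinner_add_left cinner_scaleC_left\<close>)
  then show ?thesis
    by (intro cinner_eqI_right) blast
qed

lemma cinner_sum_scaleC:
  "cinner (\<Sum>a\<in>F. scaleC (c a) (x a)) (\<Sum>b\<in>G. scaleC (d b) (y b))
   = (\<Sum>a\<in>F. \<Sum>b\<in>G. c a * cnj (d b) * cinner (x a) (y b::'a::complex_inner))"
  by (simp only: cinner_sum_left cinner_scaleC_left)
    (simp only: cinner_sum_right cinner_scaleC_right sum_distrib_left mult.assoc)

lemma norm_sum_scaleC_eq:
  fixes u :: "'i \<Rightarrow> 'a::complex_inner" and w :: "'i \<Rightarrow> 'b::complex_inner"
  assumes ip: "\<And>a b. a \<in> I \<Longrightarrow> b \<in> I \<Longrightarrow> cinner (w a) (w b) = cinner (u a) (u b)"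
    and "F \<subseteq> I"
  shows "norm (\<Sum>a\<in>F. scaleC (c a) (w a)) = norm (\<Sum>a\<in>F. scaleC (c a) (u a))"
proof -
  have "complex_of_real ((norm (\<Sum>a\<in>F. scaleC (c a) (w a)))\<^sup>2)
      = complex_of_real ((norm (\<Sum>a\<in>F. scaleC (c a) (u a)))\<^sup>2)"
    unfolding cinner_norm[symmetric] cinner_sum_scaleC
    using assms by (intro sum.cong refl) (auto simp: subset_eq)
  then show ?thesis
    by (simp only: of_real_eq_iff power2_eq_iff_nonneg norm_ge_zero)
qed

lemma sum_scaleC_eq_transfer:
  fixes u :: "'i \<Rightarrow> 'a::complex_inner" and w :: "'i \<Rightarrow> 'b::complex_inner"
  assumes ip: "\<And>a b. a \<in> I \<Longrightarrow> b \<in> I \<Longrightarrow> cinner (w a) (w b) = cinner (u a) (u b)"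
    and F: "finite F" "F \<subseteq> I" and G: "finite G" "G \<subseteq> I"
    and eq: "(\<Sum>a\<in>F. scaleC (c a) (u a)) = (\<Sum>a\<in>G. scaleC (d a) (u a))"
  shows "(\<Sum>a\<in>F. scaleC (c a) (w a)) = (\<Sum>a\<in>G. scaleC (d a) (w a))"
proof -
  let ?e = "\<lambda>a. (if a \<in> F then c a else 0) + (if a \<in> G then - d a else 0)"
  have diff: "(\<Sum>a\<in>F. scaleC (c a) (v a)) - (\<Sum>a\<in>G. scaleC (d a) (v a))
      = (\<Sum>a\<in>F \<union> G. scaleC (?e a) (v a))" for v :: "'i \<Rightarrow> 'c::complex_inner"
    using sum_scaleC_union[OF F(1) G(1), of c v "\<lambda>a. - d a"]
    by (simp add: scaleC_minus_left sum_negf)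
  \<comment> \<open>The difference of the two representations is mapped to a vector of the same norm, 0.\<close>
  have "norm (\<Sum>a\<in>F \<union> G. scaleC (?e a) (w a)) = norm (\<Sum>a\<in>F \<union> G. scaleC (?e a) (u a))"
    using F G by (intro norm_sum_scaleC_eq[OF ip]) auto
  then show ?thesis
    using diff[of u] diff[of w] eq by simp
qed

lemma linear_isometry_on_cspan_exists:
  fixes u :: "'i \<Rightarrow> 'a::complex_inner" and w :: "'i \<Rightarrow> 'b::complex_inner"
  assumes ip: "\<And>a b. a \<in> I \<Longrightarrow> b \<in> I \<Longrightarrow> cinner (w a) (w b) = cinner (u a) (u b)"
  obtains f where "\<And>a. a \<in> I \<Longrightarrow> f (u a) = w a"
    and "\<And>x y. x \<in> cspan (u ` I) \<Longrightarrow> y \<in> cspan (u ` I) \<Longrightarrow> f (x + y) = f x + f y"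
    and "\<And>c x. x \<in> cspan (u ` I) \<Longrightarrow> f (scaleC c x) = scaleC c (f x)"
    and "\<And>x. x \<in> cspan (u ` I) \<Longrightarrow> norm (f x) = norm x"
proof -
  define f where "f v = (SOME w'. \<exists>F c. finite F \<and> F \<subseteq> I \<and> v = (\<Sum>a\<in>F. scaleC (c a) (u a))
      \<and> w' = (\<Sum>a\<in>F. scaleC (c a) (w a)))" for v
  have f_sum: "f (\<Sum>a\<in>F. scaleC (c a) (u a)) = (\<Sum>a\<in>F. scaleC (c a) (w a))"
    if F: "finite F" "F \<subseteq> I" for F c
  proof -
    let ?P = "\<lambda>w'. \<exists>G d. finite G \<and> G \<subseteq> I
      \<and> (\<Sum>a\<in>F. scaleC (c a) (u a)) = (\<Sum>a\<in>G. scaleC (d a) (u a))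
      \<and> w' = (\<Sum>a\<in>G. scaleC (d a) (w a))"
    have "?P (\<Sum>a\<in>F. scaleC (c a) (w a))"
      using F by blast
    then have "?P (f (\<Sum>a\<in>F. scaleC (c a) (u a)))"
      unfolding f_def by (rule someI)
    then obtain G d where "finite G" "G \<subseteq> I"
      "(\<Sum>a\<in>F. scaleC (c a) (u a)) = (\<Sum>a\<in>G. scaleC (d a) (u a))"
      "f (\<Sum>a\<in>F. scaleC (c a) (u a)) = (\<Sum>a\<in>G. scaleC (d a) (w a))"
      by blast
    then show ?thesis
      using sum_scaleC_eq_transfer[OF ip F] by simp
  qed
  show ?thesis
  proof
    show "f (u a) = w a" if "a \<in> I" for a
      using f_sum[of "{a}" "\<lambda>_. 1"] that by (simp add: scaleC_one)
  next
    fix x y assume x: "x \<in> cspan (u ` I)" and y: "y \<in> cspan (u ` I)"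
    obtain F c where F: "finite F" "F \<subseteq> I" "x = (\<Sum>a\<in>F. scaleC (c a) (u a))"
      using x by (rule cspan_imageE)
    obtain G d where G: "finite G" "G \<subseteq> I" "y = (\<Sum>a\<in>G. scaleC (d a) (u a))"
      using y by (rule cspan_imageE)
    let ?c = "\<lambda>a. (if a \<in> F then c a else 0) + (if a \<in> G then d a else 0)"
    note sum = sum_scaleC_union[OF F(1) G(1), of c _ d]
    have "f (x + y) = f (\<Sum>a\<in>F \<union> G. scaleC (?c a) (u a))"
      by (simp only: F(3) G(3) sum)
    also have "\<dots> = (\<Sum>a\<in>F \<union> G. scaleC (?c a) (w a))"
      using F G by (intro f_sum) auto
    also have "\<dots> = f x + f y"
      by (simp only: sum[symmetric] F(3) G(3) f_sum F(1,2) G(1,2))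
    finally show "f (x + y) = f x + f y" .
  next
    fix c x assume "x \<in> cspan (u ` I)"
    then obtain F d where F: "finite F" "F \<subseteq> I" "x = (\<Sum>a\<in>F. scaleC (d a) (u a))"
      by (rule cspan_imageE)
    then show "f (scaleC c x) = scaleC c (f x)"
      using f_sum[OF F(1,2), of "\<lambda>a. c * d a"]
      by (simp add: f_sum scaleC_sum_right scaleC_scaleC)
  next
    fix x assume "x \<in> cspan (u ` I)"
    then obtain F d where F: "finite F" "F \<subseteq> I" "x = (\<Sum>a\<in>F. scaleC (d a) (u a))"
      by (rule cspan_imageE)
    then show "norm (f x) = norm x"
      using norm_sum_scaleC_eq[OF ip F(2)] by (simp add: f_sum)
  qed
qed

lemma bounded_linear_scaleC_right: "bounded_linear (scaleC c :: 'a::complex_inner \<Rightarrow> 'a)"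
  by (rule bounded_linear_intro[where K="cmod c"])
    (simp_all add: scaleC_add_right scaleR_scaleC scaleC_scaleC mult.commute norm_scaleC)

lemma continuous_eq_on_dense:
  fixes f g :: "'a::topological_space \<Rightarrow> 'b::t2_space"
  assumes "closure V = UNIV" "continuous_on UNIV f" "continuous_on UNIV g"
    and "\<And>x. x \<in> V \<Longrightarrow> f x = g x"
  shows "f x = g x"
  using closure_minimal[of V "{x. f x = g x}"] closed_Collect_eq[OF assms(2,3)] assms(1,4) by blast

lemma uniformly_continuous_on_isometry:
  assumes "\<And>x y. x \<in> V \<Longrightarrow> y \<in> V \<Longrightarrow> dist (f x) (f y) = dist x y"
  shows "uniformly_continuous_on V f"
  unfolding uniformly_continuous_on_def
proof (intro allI impI)
  fix e :: real
  assume "0 < e"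
  then show "\<exists>d>0. \<forall>x\<in>V. \<forall>x'\<in>V. dist x' x < d \<longrightarrow> dist (f x') (f x) < e"
    using assms by (intro exI[of _ e]) auto
qed

lemma linear_isometry_extension:
  fixes f :: "'a::complex_inner \<Rightarrow> 'b::chilbert"
  assumes dense: "closure V = UNIV"
    and V_add: "\<And>x y. x \<in> V \<Longrightarrow> y \<in> V \<Longrightarrow> x + y \<in> V"
    and V_scale: "\<And>c x. x \<in> V \<Longrightarrow> scaleC c x \<in> V"
    and f_add: "\<And>x y. x \<in> V \<Longrightarrow> y \<in> V \<Longrightarrow> f (x + y) = f x + f y"
    and f_scale: "\<And>c x. x \<in> V \<Longrightarrow> f (scaleC c x) = scaleC c (f x)"
    and f_norm: "\<And>x. x \<in> V \<Longrightarrow> norm (f x) = norm x"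
  obtains g where "bounded_clinear g" "\<And>x. x \<in> V \<Longrightarrow> g x = f x"
proof -
  have "dist (f x) (f y) = dist x y" if "x \<in> V" "y \<in> V" for x y
  proof -
    have "f (x - y) = f x - f y"
      using f_add[OF that(1) V_scale[OF that(2)], of "-1"] f_scale[OF that(2), of "-1"]
      by (simp add: scaleC_minus1_left)
    moreover have "x - y \<in> V"
      using V_add[OF that(1) V_scale[OF that(2), of "-1"]] by (simp add: scaleC_minus1_left)
    ultimately show ?thesis
      using f_norm[of "x - y"] by (simp add: dist_norm)
  qed
  then have "uniformly_continuous_on V f"
    by (rule uniformly_continuous_on_isometry)
  then obtain g where g: "uniformly_continuous_on (closure V) g" and fg: "\<And>x. x \<in> V \<Longrightarrow> f x = g x"
    by (rule uniformly_continuous_on_extension_on_closure) blast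
  have cont: "continuous_on UNIV g"
    using uniformly_continuous_imp_continuous[OF g] by (simp add: dense)
  have cont_scaleC: "continuous_on UNIV (scaleC c :: 'c::complex_inner \<Rightarrow> 'c)" for c
    by (rule linear_continuous_on[OF bounded_linear_scaleC_right])
  have g_add_right: "g (x + y) = g x + g y" if y: "y \<in> V" for x y
  proof (rule continuous_eq_on_dense[OF dense, where f="\<lambda>x. g (x + y)" and g="\<lambda>x. g x + g y"])
    show "continuous_on UNIV (\<lambda>x. g (x + y))"
      using continuous_on_compose2[OF cont continuous_on_add[OF continuous_on_id continuous_on_const]]
      by simp
    show "g (x + y) = g x + g y" if "x \<in> V" for x
      using that y by (simp add: V_add f_add flip: fg)
  qed (rule continuous_on_add[OF cont continuous_on_const])
  have g_add: "g (x + y) = g x + g y" for x y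
  proof (rule continuous_eq_on_dense[OF dense, where f="\<lambda>y. g (x + y)" and g="\<lambda>y. g x + g y"])
    show "continuous_on UNIV (\<lambda>y. g (x + y))"
      using continuous_on_compose2[OF cont continuous_on_add[OF continuous_on_const continuous_on_id]]
      by simp
  qed (simp_all add: g_add_right continuous_on_add[OF continuous_on_const cont])
  have g_scale: "g (scaleC c x) = scaleC c (g x)" for c x
  proof (rule continuous_eq_on_dense[OF dense, where f="\<lambda>x. g (scaleC c x)" and g="\<lambda>x. scaleC c (g x)"])
    show "continuous_on UNIV (\<lambda>x. g (scaleC c x))"
      using continuous_on_compose2[OF cont cont_scaleC] by simp
    show "continuous_on UNIV (\<lambda>x. scaleC c (g x))"
      using continuous_on_compose2[OF cont_scaleC cont] by simp
  qed (simp add: V_scale f_scale flip: fg)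
  have g_norm: "norm (g x) = norm x" for x
    by (rule continuous_eq_on_dense[OF dense, where f="\<lambda>x. norm (g x)" and g=norm])
      (simp_all add: continuous_on_norm[OF cont] continuous_on_norm_id f_norm flip: fg)
  have "bounded_clinear g"
    unfolding bounded_clinear_def using g_add g_scale g_norm
    by (intro conjI allI exI[of _ 1]) simp_all
  then show ?thesis
    by (rule that) (simp add: fg)
qed

lemma isometric_extension:
  fixes u :: "'i \<Rightarrow> 'a::complex_inner" and w :: "'i \<Rightarrow> 'b::chilbert"
  assumes dense: "closure (cspan (u ` I)) = UNIV"
    and ip: "\<And>a b. a \<in> I \<Longrightarrow> b \<in> I \<Longrightarrow> cinner (w a) (w b) = cinner (u a) (u b)"
  obtains T where "bounded_clinear T" "\<And>a. a \<in> I \<Longrightarrow> T (u a) = w a"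
proof (rule linear_isometry_on_cspan_exists[OF ip])
  fix f
  assume fu: "\<And>a. a \<in> I \<Longrightarrow> f (u a) = w a"
    and f_add: "\<And>x y. x \<in> cspan (u ` I) \<Longrightarrow> y \<in> cspan (u ` I) \<Longrightarrow> f (x + y) = f x + f y"
    and f_scale: "\<And>c x. x \<in> cspan (u ` I) \<Longrightarrow> f (scaleC c x) = scaleC c (f x)"
    and f_norm: "\<And>x. x \<in> cspan (u ` I) \<Longrightarrow> norm (f x) = norm x"
  obtain g where g: "bounded_clinear g" "\<And>x. x \<in> cspan (u ` I) \<Longrightarrow> g x = f x"
    using linear_isometry_extension[OF dense cspan_add cspan_scaleC f_add f_scale f_norm] by blast
  have "g (u a) = w a" if "a \<in> I" for a
    using that by (simp add: g(2) cspan_superset fu)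
  with g(1) show thesis
    by (rule that)
qed

section \<open>Vacuum coefficients of words\<close>

text \<open>\<open>fock_coeff q w b\<close> is the vacuum coefficient \<open>\<langle>s_w\<^sup>* s_b \<Omega>, \<Omega>\<rangle>\<close> of the Fock
  representation: \<open>s_g\<^sup>*\<close> passes each letter \<open>h \<noteq> g\<close> of \<open>b\<close> at the cost of a factor \<open>q g h\<close>
  until it cancels the first \<open>g\<close>; if \<open>b\<close> contains no \<open>g\<close> it reaches \<open>\<Omega>\<close> and gives 0.\<close>

fun fock_coeff :: "(nat \<Rightarrow> nat \<Rightarrow> complex) \<Rightarrow> nat list \<Rightarrow> nat list \<Rightarrow> complex" where
  "fock_coeff q [] b = (if b = [] then 1 else 0)"
| "fock_coeff q (g # w) b =
     (if g \<in> set b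
      then prod_list (map (q g) (takeWhile (\<lambda>h. h \<noteq> g) b)) * fock_coeff q w (remove1 g b)
      else 0)"

lemma fock_coeff_Cons_same: "fock_coeff q (g # w) (g # b) = fock_coeff q w b"
  by simp

lemma fock_coeff_self: "fock_coeff q w w = 1"
  by (induction w) simp_all

lemma fock_coeff_append:
  assumes "length w = length b" "fock_coeff q w b \<noteq> 0"
  shows "fock_coeff q (w @ w') (b @ b') = fock_coeff q w b * fock_coeff q w' b'"
  using assms
proof (induction w arbitrary: b)
  case (Cons g w)
  then have g: "g \<in> set b"
    by (auto split: if_splits)
  have "length w = length (remove1 g b)"
    using Cons.prems(1) g by (simp add: length_remove1)
  moreover have "fock_coeff q w (remove1 g b) \<noteq> 0"
    using Cons.prems(2) g by auto
  ultimately have IH: "fock_coeff q (w @ w') (remove1 g b @ b')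
      = fock_coeff q w (remove1 g b) * fock_coeff q w' b'"
    by (rule Cons.IH)
  have "takeWhile (\<lambda>h. h \<noteq> g) (b @ b') = takeWhile (\<lambda>h. h \<noteq> g) b"
    by (rule takeWhile_append1[OF g]) simp
  then show ?case
    using g by (simp add: remove1_append IH)
qed simp

lemma norm_prod_list_le_1:
  fixes xs :: "'a::real_normed_div_algebra list"
  shows "(\<And>x. x \<in> set xs \<Longrightarrow> norm x \<le> 1) \<Longrightarrow> norm (prod_list xs) \<le> 1"
  by (induction xs) (auto simp: norm_mult intro: mult_le_one)

lemma map_upt_append: "k \<le> k' \<Longrightarrow> map f [0..<k'] = map f [0..<k] @ map f [k..<k']"
  by (metis le_add_diff_inverse upt_add_eq_append zero_le map_append)

lemma fock_coeff_prefix_split: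
  assumes "fock_coeff q (map \<gamma> [0..<k]) (map \<beta> [0..<k]) \<noteq> 0" "k \<le> k'"
  shows "fock_coeff q (map \<gamma> [0..<k']) (map \<beta> [0..<k'])
    = fock_coeff q (map \<gamma> [0..<k]) (map \<beta> [0..<k]) * fock_coeff q (map \<gamma> [k..<k']) (map \<beta> [k..<k'])"
  using fock_coeff_append[of "map \<gamma> [0..<k]" "map \<beta> [0..<k]"] assms
  by (simp add: map_upt_append[OF assms(2)])

lemma uniform_bound_below_1:
  fixes d :: nat and q :: "nat \<Rightarrow> nat \<Rightarrow> complex"
  assumes "\<forall>i\<in>{1..d}. \<forall>j\<in>{1..d}. i \<noteq> j \<longrightarrow> norm (q i j) < (1::real)"
  obtains lam :: real where "0 \<le> lam" "lam < 1"
    "\<And>i j. i \<in> {1..d} \<Longrightarrow> j \<in> {1..d} \<Longrightarrow> i \<noteq> j \<Longrightarrow> norm (q i j) \<le> lam"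
proof -
  define M where "M = insert 0 ((\<lambda>(i, j). norm (q i j)) ` {(i, j) \<in> {1..d} \<times> {1..d}. i \<noteq> j})"
  have "finite {(i, j) \<in> {1..d} \<times> {1..d}. i \<noteq> j}"
    by (rule finite_subset[of _ "{1..d} \<times> {1..d}"]) (auto intro: finite_cartesian_product)
  then have fin: "finite M"
    unfolding M_def by simp
  show ?thesis
  proof (rule that[of "Max M"])
    show "0 \<le> Max M"
      using fin by (simp add: M_def)
    show "Max M < 1"
      using Max_in[OF fin] assms by (auto simp: M_def)
    show "norm (q i j) \<le> Max M" if "i \<in> {1..d}" "j \<in> {1..d}" "i \<noteq> j" for i j
      using fin that by (intro Max_ge) (auto simp: M_def)
  qed
qed

context
  fixes d :: nat and q :: "nat \<Rightarrow> nat \<Rightarrow> complex" and lam :: real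
  assumes q_bound: "\<And>i j. i \<in> {1..d} \<Longrightarrow> j \<in> {1..d} \<Longrightarrow> i \<noteq> j \<Longrightarrow> cmod (q i j) \<le> lam"
    and lam_nonneg: "0 \<le> lam" and lam_less_1: "lam < 1"
begin

lemma norm_prod_takeWhile_le_1:
  assumes "g \<in> {1..d}" "set b \<subseteq> {1..d}"
  shows "cmod (prod_list (map (q g) (takeWhile (\<lambda>h. h \<noteq> g) b))) \<le> 1"
proof (rule norm_prod_list_le_1)
  fix x assume "x \<in> set (map (q g) (takeWhile (\<lambda>h. h \<noteq> g) b))"
  then obtain h where "h \<in> set b" "h \<noteq> g" "x = q g h"
    by (auto dest: set_takeWhileD)
  then show "cmod x \<le> 1"
    using q_bound[of g h] assms lam_less_1 by auto
qed

lemma norm_fock_coeff_le_1: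
  "set w \<subseteq> {1..d} \<Longrightarrow> set b \<subseteq> {1..d} \<Longrightarrow> cmod (fock_coeff q w b) \<le> 1"
proof (induction w arbitrary: b)
  case (Cons g w)
  have "set (remove1 g b) \<subseteq> {1..d}"
    using Cons.prems(2) by (meson order_trans set_remove1_subset)
  then have "cmod (fock_coeff q w (remove1 g b)) \<le> 1"
    using Cons by simp
  moreover have "cmod (prod_list (map (q g) (takeWhile (\<lambda>h. h \<noteq> g) b))) \<le> 1"
    using Cons.prems by (intro norm_prod_takeWhile_le_1) auto
  ultimately show ?case
    by (simp add: norm_mult mult_le_one)
qed simp

lemma norm_fock_coeff_le:
  assumes "set w \<subseteq> {1..d}" "set b \<subseteq> {1..d}" "length w = length b" "w \<noteq> b"
  shows "cmod (fock_coeff q w b) \<le> lam"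
  using assms
proof (induction w arbitrary: b)
  case (Cons g w)
  then obtain h b' where b: "b = h # b'"
    by (cases b) auto
  show ?case
  proof (cases "g = h")
    case True
    then show ?thesis
      using Cons b by simp
  next
    case False
    have "set (remove1 g b) \<subseteq> {1..d}"
      using Cons.prems(2) by (meson order_trans set_remove1_subset)
    then have "cmod (fock_coeff q w (remove1 g b)) \<le> 1"
      using Cons.prems(1) norm_fock_coeff_le_1 by simp
    moreover have "cmod (prod_list (map (q g) (takeWhile (\<lambda>x. x \<noteq> g) b'))) \<le> 1"
      using Cons.prems b by (intro norm_prod_takeWhile_le_1) auto
    moreover have "cmod (q g h) \<le> lam"
      using Cons.prems b False by (intro q_bound) auto
    ultimately have "cmod (q g h) * (cmod (prod_list (map (q g) (takeWhile (\<lambda>x. x \<noteq> g) b')))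
        * cmod (fock_coeff q w (remove1 g b))) \<le> lam * 1"
      using lam_nonneg by (intro mult_mono mult_le_one) auto
    then show ?thesis
      using b False lam_nonneg by (auto simp: norm_mult mult.assoc)
  qed
qed simp

text \<open>Along two infinite multiindices the vacuum coefficients of the prefixes are either
  eventually constant, or they pick up a factor of modulus at most \<open>lam\<close> from each
  further disagreement, and hence tend to 0.\<close>

lemma fock_coeff_prefixes_decay:
  assumes ranges: "\<And>k. \<gamma> k \<in> {1..d}" "\<And>k. \<beta> k \<in> {1..d}"
    and disagree: "\<And>k. fock_coeff q (map \<gamma> [0..<k]) (map \<beta> [0..<k]) \<noteq> 0 \<Longrightarrow> \<exists>j\<ge>k. \<gamma> j \<noteq> \<beta> j"
  shows "\<exists>N. \<forall>k\<ge>N. cmod (fock_coeff q (map \<gamma> [0..<k]) (map \<beta> [0..<k])) \<le> lam ^ n"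
proof -
  define X where "X k = fock_coeff q (map \<gamma> [0..<k]) (map \<beta> [0..<k])" for k
  have sets: "set (map \<gamma> xs) \<subseteq> {1..d}" "set (map \<beta> xs) \<subseteq> {1..d}" for xs
    using ranges by auto
  have "\<exists>N. \<forall>k\<ge>N. cmod (X k) \<le> lam ^ n"
  proof (induction n)
    case 0
    show ?case
      by (simp add: X_def norm_fock_coeff_le_1[OF sets])
  next
    case (Suc n)
    then obtain N where N: "\<And>k. k \<ge> N \<Longrightarrow> cmod (X k) \<le> lam ^ n"
      by blast
    show ?case
    proof (cases "\<exists>k\<ge>N. X k \<noteq> 0")
      case True
      then obtain k where k: "k \<ge> N" "X k \<noteq> 0"
        by blast
      then obtain j where j: "j \<ge> k" "\<gamma> j \<noteq> \<beta> j"
        using disagree unfolding X_def by blast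
      have "cmod (X k') \<le> lam ^ Suc n" if "k' > j" for k'
      proof -
        have "map \<gamma> [k..<k'] \<noteq> map \<beta> [k..<k']"
        proof
          assume "map \<gamma> [k..<k'] = map \<beta> [k..<k']"
          then have "map \<gamma> [k..<k'] ! (j - k) = map \<beta> [k..<k'] ! (j - k)"
            by (rule arg_cong)
          then show False
            using j that by simp
        qed
        then have "cmod (fock_coeff q (map \<gamma> [k..<k']) (map \<beta> [k..<k'])) \<le> lam"
          by (rule norm_fock_coeff_le[OF sets(1) sets(2), rotated]) simp
        then have "cmod (X k) * cmod (fock_coeff q (map \<gamma> [k..<k']) (map \<beta> [k..<k']))
            \<le> lam ^ n * lam"
          using N[OF k(1)] lam_nonneg by (intro mult_mono) auto
        moreover have "X k' = X k * fock_coeff q (map \<gamma> [k..<k']) (map \<beta> [k..<k'])"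
          using k(2) j that unfolding X_def by (intro fock_coeff_prefix_split) simp_all
        ultimately show ?thesis
          by (simp add: norm_mult mult.commute)
      qed
      then show "\<exists>N. \<forall>k\<ge>N. cmod (X k) \<le> lam ^ Suc n"
        by (intro exI[of _ "Suc j"]) auto
    next
      case False
      then show "\<exists>N. \<forall>k\<ge>N. cmod (X k) \<le> lam ^ Suc n"
        using lam_nonneg by (intro exI[of _ N]) auto
    qed
  qed
  then show ?thesis
    by (simp add: X_def)
qed

lemma fock_coeff_prefixes_tendsto_0:
  assumes ranges: "\<And>k. \<gamma> k \<in> {1..d}" "\<And>k. \<beta> k \<in> {1..d}"
    and disagree: "\<And>k. fock_coeff q (map \<gamma> [0..<k]) (map \<beta> [0..<k]) \<noteq> 0 \<Longrightarrow> \<exists>j\<ge>k. \<gamma> j \<noteq> \<beta> j"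
  shows "(\<lambda>k. fock_coeff q (map \<gamma> [0..<k]) (map \<beta> [0..<k])) \<longlonglongrightarrow> 0"
proof (rule LIMSEQ_I)
  fix r :: real
  assume "0 < r"
  then obtain n where n: "lam ^ n < r"
    using real_arch_pow_inv lam_less_1 by blast
  obtain N where "\<And>k. k \<ge> N \<Longrightarrow> cmod (fock_coeff q (map \<gamma> [0..<k]) (map \<beta> [0..<k])) \<le> lam ^ n"
    using fock_coeff_prefixes_decay[OF ranges disagree] by blast
  then show "\<exists>N. \<forall>k\<ge>N. norm (fock_coeff q (map \<gamma> [0..<k]) (map \<beta> [0..<k]) - 0) < r"
    using n by (intro exI[of _ N]) force
qed

lemma fock_coeff_prefixes_convergent:
  assumes ranges: "\<And>k. \<gamma> k \<in> {1..d}" "\<And>k. \<beta> k \<in> {1..d}"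
  shows "convergent (\<lambda>k. fock_coeff q (map \<gamma> [0..<k]) (map \<beta> [0..<k]))"
proof (cases "\<exists>k. fock_coeff q (map \<gamma> [0..<k]) (map \<beta> [0..<k]) \<noteq> 0 \<and> (\<forall>j\<ge>k. \<gamma> j = \<beta> j)")
  case True
  then obtain k where k: "fock_coeff q (map \<gamma> [0..<k]) (map \<beta> [0..<k]) \<noteq> 0"
    and agree: "\<forall>j\<ge>k. \<gamma> j = \<beta> j"
    by blast
  have "fock_coeff q (map \<gamma> [0..<k']) (map \<beta> [0..<k']) = fock_coeff q (map \<gamma> [0..<k]) (map \<beta> [0..<k])"
    if "k \<le> k'" for k'
  proof -
    have "map \<gamma> [k..<k'] = map \<beta> [k..<k']"
      using agree by (intro map_cong) auto
    then have "fock_coeff q (map \<gamma> [k..<k']) (map \<beta> [k..<k']) = 1"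
      by (simp only: fock_coeff_self)
    then show ?thesis
      using fock_coeff_prefix_split[OF k that] by simp
  qed
  then have "eventually (\<lambda>k'. fock_coeff q (map \<gamma> [0..<k']) (map \<beta> [0..<k'])
      = fock_coeff q (map \<gamma> [0..<k]) (map \<beta> [0..<k])) sequentially"
    by (rule eventually_sequentiallyI)
  then show ?thesis
    unfolding convergent_def by (blast intro: tendsto_eventually)
next
  case False
  then have "(\<lambda>k. fock_coeff q (map \<gamma> [0..<k]) (map \<beta> [0..<k])) \<longlonglongrightarrow> 0"
    by (intro fock_coeff_prefixes_tendsto_0[OF ranges]) blast
  then show ?thesis
    unfolding convergent_def by blast
qed

end

lemma word_op_Nil [simp]: "word_op S [] x = x"
  by (simp add: word_op_def)

lemma word_op_Cons [simp]: "word_op S (a # w) x = S a (word_op S w x)"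
  by (simp add: word_op_def)

lemma word_adj_Nil [simp]: "word_adj S [] x = x"
  by (simp add: word_adj_def)

lemma word_adj_Cons [simp]: "word_adj S (a # w) x = word_adj S w (cadjoint (S a) x)"
  by (simp add: word_adj_def)

context
  fixes d :: nat and q :: "nat \<Rightarrow> nat \<Rightarrow> complex" and S :: "nat \<Rightarrow> 'f::chilbert \<Rightarrow> 'f"
  assumes W: "W_rep d q S"
begin

lemma bounded_clinear_generator: "j \<in> {1..d} \<Longrightarrow> bounded_clinear (S j)"
  using W unfolding W_rep_def by blast

lemma cadjoint_generator_generator: "j \<in> {1..d} \<Longrightarrow> cadjoint (S j) (S j x) = x"
  using W unfolding W_rep_def by (metis comp_apply id_apply)

lemma cadjoint_generator_commute:
  "i \<in> {1..d} \<Longrightarrow> j \<in> {1..d} \<Longrightarrow> i \<noteq> j \<Longrightarrow>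
    cadjoint (S i) (S j x) = scaleC (q i j) (S j (cadjoint (S i) x))"
  using W unfolding W_rep_def by (metis comp_apply)

lemma word_op_zero: "set w \<subseteq> {1..d} \<Longrightarrow> word_op S w 0 = 0"
  by (induction w) (simp_all add: bounded_clinear_zero[OF bounded_clinear_generator])

lemma word_adj_scaleC:
  "set w \<subseteq> {1..d} \<Longrightarrow> word_adj S w (scaleC c x) = scaleC c (word_adj S w x)"
  by (induction w arbitrary: x)
    (simp_all add: bounded_clinear_scaleC[OF bounded_clinear_cadjoint[OF bounded_clinear_generator]])

lemma cadjoint_word_op:
  assumes j: "j \<in> {1..d}" and "set b \<subseteq> {1..d}"
  shows "cadjoint (S j) (word_op S b x) =
    (if j \<in> set b
     then scaleC (prod_list (map (q j) (takeWhile (\<lambda>h. h \<noteq> j) b))) (word_op S (remove1 j b) x)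
     else scaleC (prod_list (map (q j) b)) (word_op S b (cadjoint (S j) x)))"
  using assms(2)
proof (induction b)
  case (Cons h b)
  then have h: "h \<in> {1..d}" and b: "set b \<subseteq> {1..d}"
    by auto
  show ?case
  proof (cases "h = j")
    case True
    then show ?thesis
      using j by (simp add: cadjoint_generator_generator scaleC_one)
  next
    case False
    then show ?thesis
      using cadjoint_generator_commute[OF j h] Cons.IH[OF b]
      by (simp add: bounded_clinear_scaleC[OF bounded_clinear_generator[OF h]] scaleC_scaleC)
  qed
qed (simp add: scaleC_one)

lemma word_adj_word_op_vacuum:
  assumes vacuum: "\<forall>j\<in>{1..d}. cadjoint (S j) \<Omega> = 0"
  shows "set g \<subseteq> {1..d} \<Longrightarrow> set b \<subseteq> {1..d} \<Longrightarrow> length g = length b \<Longrightarrow>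
    word_adj S g (word_op S b \<Omega>) = scaleC (fock_coeff q g b) \<Omega>"
proof (induction g arbitrary: b)
  case (Cons a g)
  then have a: "a \<in> {1..d}" and g: "set g \<subseteq> {1..d}"
    by auto
  show ?case
  proof (cases "a \<in> set b")
    case True
    have "set (remove1 a b) \<subseteq> {1..d}"
      using Cons.prems(2) by (meson order_trans set_remove1_subset)
    moreover have "length g = length (remove1 a b)"
      using Cons.prems(3) True by (simp add: length_remove1)
    ultimately show ?thesis
      using True Cons.IH[OF g] cadjoint_word_op[OF a Cons.prems(2)]
      by (simp add: word_adj_scaleC[OF g] scaleC_scaleC)
  next
    case False
    then show ?thesis
      using vacuum a cadjoint_word_op[OF a Cons.prems(2)]
      by (simp add: word_op_zero[OF Cons.prems(2)] word_adj_scaleC[OF g, of 0, simplified])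
  qed
qed (simp add: scaleC_one)

end

lemma qfin_eq_fock_coeff:
  assumes "fock_rep d q S \<Omega>" "set g \<subseteq> {1..d}" "set b \<subseteq> {1..d}" "length g = length b"
  shows "qfin S \<Omega> g b = fock_coeff q g b"
proof -
  have "word_adj S g (word_op S b \<Omega>) = scaleC (fock_coeff q g b) \<Omega>"
    using assms word_adj_word_op_vacuum[of d q S \<Omega> g b] unfolding fock_rep_def by blast
  moreover have "norm \<Omega> = 1"
    using assms(1) unfolding fock_rep_def by blast
  ultimately show ?thesis
    by (simp add: qfin_def cinner_scaleC_left cinner_norm)
qed

lemma Lam_sigma_j: "j \<in> {1..d} \<Longrightarrow> \<beta> \<in> Lam d \<Longrightarrow> sigma_j j \<beta> \<in> Lam d"
  by (auto simp: Lam_def sigma_j_def split: nat.split)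

lemma Lam_remove_j: "\<beta> \<in> Lam d \<Longrightarrow> remove_j j \<beta> \<in> Lam d"
  by (auto simp: Lam_def remove_j_def)

lemma funpow_sigma: "(sigma ^^ n) \<beta> = (\<lambda>k. \<beta> (k + n))"
  by (induction n) (simp_all add: sigma_def)

lemma sigma_j_in_equiv_class:
  assumes "j \<in> {1..d}" "\<beta> \<in> equiv_class d \<alpha>"
  shows "sigma_j j \<beta> \<in> equiv_class d \<alpha>"
proof -
  obtain m n where mn: "(sigma ^^ m) \<beta> = (sigma ^^ n) \<alpha>"
    using assms(2) by (auto simp: equiv_class_def mequiv_def)
  have "(sigma ^^ Suc m) (sigma_j j \<beta>) = (sigma ^^ m) \<beta>"
    by (simp add: funpow_sigma sigma_j_def sigma_def)
  then have "(sigma ^^ Suc m) (sigma_j j \<beta>) = (sigma ^^ n) \<alpha>"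
    using mn by (rule trans)
  then have "mequiv (sigma_j j \<beta>) \<alpha>"
    unfolding mequiv_def by blast
  then show ?thesis
    using assms by (simp add: equiv_class_def Lam_sigma_j)
qed

lemma remove_j_in_equiv_class:
  assumes "\<beta> \<in> equiv_class d \<alpha>"
  shows "remove_j j \<beta> \<in> equiv_class d \<alpha>"
proof -
  obtain m n where mn: "(sigma ^^ m) \<beta> = (sigma ^^ n) \<alpha>"
    using assms by (auto simp: equiv_class_def mequiv_def)
  have mn': "\<beta> (k + m) = \<alpha> (k + n)" for k
    using fun_cong[OF mn, of k] by (simp add: funpow_sigma)
  let ?r = "first_pos j \<beta>"
  have "(sigma ^^ (?r + m)) (remove_j j \<beta>) = (sigma ^^ (Suc ?r + n)) \<alpha>"
  proof
    fix k
    show "(sigma ^^ (?r + m)) (remove_j j \<beta>) k = (sigma ^^ (Suc ?r + n)) \<alpha> k"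
      using mn'[of "Suc (k + ?r)"] by (simp add: funpow_sigma sigma_def remove_j_def ac_simps)
  qed
  then have "mequiv (remove_j j \<beta>) \<alpha>"
    unfolding mequiv_def by blast
  then show ?thesis
    using assms by (simp add: equiv_class_def Lam_remove_j)
qed

lemma at_first_pos: "contains j \<beta> \<Longrightarrow> \<beta> (first_pos j \<beta>) = j"
  unfolding contains_def first_pos_def by (rule LeastI_ex)

lemma before_first_pos: "k < first_pos j \<beta> \<Longrightarrow> \<beta> k \<noteq> j"
  unfolding first_pos_def by (rule not_less_Least)

lemma contains_sigma_j_self: "contains j (sigma_j j \<beta>)"
  unfolding contains_def by (rule exI[of _ 0]) (simp add: sigma_j_def)

lemma first_pos_sigma_j_self: "first_pos j (sigma_j j \<beta>) = 0"
  unfolding first_pos_def by (rule Least_eq_0) (simp add: sigma_j_def)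

lemma remove_j_sigma_j_self: "remove_j j (sigma_j j \<beta>) = \<beta>"
  by (simp add: remove_j_def first_pos_sigma_j_self first_pos_sigma_j_self[unfolded sigma_j_def]
      sigma_j_def)

lemma qj_sigma_j_self: "qj q j (sigma_j j \<beta>) = 1"
  by (simp add: qj_def first_pos_sigma_j_self)

lemma contains_sigma_j: "i \<noteq> j \<Longrightarrow> contains i (sigma_j j \<beta>) \<longleftrightarrow> contains i \<beta>"
  unfolding contains_def sigma_j_def by (metis nat.case(1) nat.case(2) nat.exhaust)

lemma first_pos_sigma_j:
  assumes "i \<noteq> j" "contains i \<beta>"
  shows "first_pos i (sigma_j j \<beta>) = Suc (first_pos i \<beta>)"
proof -
  obtain k where "\<beta> k = i"
    using assms(2) unfolding contains_def by blast
  then have "(LEAST n. sigma_j j \<beta> n = i) = Suc (LEAST m. sigma_j j \<beta> (Suc m) = i)"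
    using assms(1) by (intro Least_Suc[of _ "Suc k"]) (auto simp: sigma_j_def)
  then show ?thesis
    by (simp add: first_pos_def sigma_j_def)
qed

lemma qj_sigma_j:
  assumes "i \<noteq> j" "contains i \<beta>"
  shows "qj q i (sigma_j j \<beta>) = q i j * qj q i \<beta>"
  unfolding qj_def first_pos_sigma_j[OF assms] prod.lessThan_Suc_shift
  by (simp add: sigma_j_def)

lemma remove_j_sigma_j:
  assumes "i \<noteq> j" "contains i \<beta>"
  shows "remove_j i (sigma_j j \<beta>) = sigma_j j (remove_j i \<beta>)"
proof
  fix k
  have fp: "first_pos i (sigma_j j \<beta>) = Suc (first_pos i \<beta>)"
    by (rule first_pos_sigma_j[OF assms])
  show "remove_j i (sigma_j j \<beta>) k = sigma_j j (remove_j i \<beta>) k"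
    by (cases k) (simp_all add: remove_j_def sigma_j_def fp fp[unfolded sigma_j_def])
qed

lemma map_sigma_j_upt: "map (sigma_j j \<beta>) [0..<Suc m] = j # map \<beta> [0..<m]"
  by (induction m) (simp_all add: sigma_j_def)

lemma prod_list_map_upt: "prod_list (map f [0..<r]) = (\<Prod>k<r. f k)"
  by (induction r) simp_all

text \<open>In a long enough prefix of \<open>\<beta>\<close> the annihilator \<open>s_j\<^sup>*\<close> cancels the letter at
  \<open>first_pos j \<beta>\<close>, which is exactly what \<open>qj\<close> and \<open>remove_j\<close> record.\<close>

lemma fock_coeff_sigma_j_prefix:
  assumes c: "contains j \<beta>" and m: "first_pos j \<beta> \<le> m"
  shows "fock_coeff q (map (sigma_j j \<gamma>) [0..<Suc m]) (map \<beta> [0..<Suc m])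
       = qj q j \<beta> * fock_coeff q (map \<gamma> [0..<m]) (map (remove_j j \<beta>) [0..<m])"
proof -
  let ?r = "first_pos j \<beta>"
  have "map \<beta> [Suc ?r..<Suc m] = map \<beta> (map Suc [?r..<m])"
    by (simp add: map_Suc_upt)
  also have "\<dots> = map (remove_j j \<beta>) [?r..<m]"
    by (auto simp: remove_j_def)
  finally have tail: "map \<beta> [Suc ?r..<Suc m] = map (remove_j j \<beta>) [?r..<m]" .
  have "map \<beta> [0..<Suc m] = map \<beta> [0..<?r] @ map \<beta> [?r..<Suc m]"
    using m by (intro map_upt_append) simp
  also have "map \<beta> [?r..<Suc m] = j # map (remove_j j \<beta>) [?r..<m]"
    using m at_first_pos[OF c] tail by (simp add: upt_conv_Cons del: upt_Suc)
  finally have split: "map \<beta> [0..<Suc m] = map \<beta> [0..<?r] @ j # map (remove_j j \<beta>) [?r..<m]" .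
  have "map (remove_j j \<beta>) [0..<?r] = map \<beta> [0..<?r]"
    by (simp add: remove_j_def)
  then have split': "map (remove_j j \<beta>) [0..<m] = map \<beta> [0..<?r] @ map (remove_j j \<beta>) [?r..<m]"
    using map_upt_append[OF m, of "remove_j j \<beta>"] by simp
  have notin: "j \<notin> set (map \<beta> [0..<?r])"
  proof
    assume "j \<in> set (map \<beta> [0..<?r])"
    then obtain k where "k < ?r" "\<beta> k = j"
      by auto
    then show False
      using before_first_pos by blast
  qed
  have jin: "j \<in> set (map \<beta> [0..<Suc m])"
    unfolding split by simp
  have tw: "takeWhile (\<lambda>h. h \<noteq> j) (map \<beta> [0..<Suc m]) = map \<beta> [0..<?r]"
    unfolding split using notin by (subst takeWhile_append2) auto
  have rm: "remove1 j (map \<beta> [0..<Suc m]) = map (remove_j j \<beta>) [0..<m]"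
    unfolding split split' using notin by (simp add: remove1_append)
  have "fock_coeff q (map (sigma_j j \<gamma>) [0..<Suc m]) (map \<beta> [0..<Suc m])
      = prod_list (map (q j) (map \<beta> [0..<?r])) * fock_coeff q (map \<gamma> [0..<m]) (map (remove_j j \<beta>) [0..<m])"
    by (simp only: map_sigma_j_upt fock_coeff.simps(2) jin tw rm if_True)
  then show ?thesis
    by (simp add: qj_def prod_list_map_upt)
qed

locale fock_space =
  fixes d :: nat and q :: "nat \<Rightarrow> nat \<Rightarrow> complex"
    and S :: "nat \<Rightarrow> 'f::chilbert \<Rightarrow> 'f" and \<Omega> :: 'f
  assumes fock: "fock_rep d q S \<Omega>"
    and q_small: "\<forall>i\<in>{1..d}. \<forall>j\<in>{1..d}. i \<noteq> j \<longrightarrow> norm (q i j) < 1"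
begin

lemma qinf_limit:
  assumes \<gamma>: "\<gamma> \<in> Lam d" and \<beta>: "\<beta> \<in> Lam d"
  shows "(\<lambda>m. fock_coeff q (map \<gamma> [0..<m]) (map \<beta> [0..<m])) \<longlonglongrightarrow> qinf S \<Omega> \<gamma> \<beta>"
proof -
  obtain lam where lam: "0 \<le> lam" "lam < 1"
    and q_bound: "\<And>i j. i \<in> {1..d} \<Longrightarrow> j \<in> {1..d} \<Longrightarrow> i \<noteq> j \<Longrightarrow> cmod (q i j) \<le> lam"
    using uniform_bound_below_1[OF q_small] by blast
  have "convergent (\<lambda>m. fock_coeff q (map \<gamma> [0..<m]) (map \<beta> [0..<m]))"
    by (rule fock_coeff_prefixes_convergent[OF q_bound lam]) (use \<gamma> \<beta> in \<open>auto simp: Lam_def\<close>)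
  moreover have "qfin S \<Omega> (map \<gamma> [0..<m]) (map \<beta> [0..<m]) = fock_coeff q (map \<gamma> [0..<m]) (map \<beta> [0..<m])"
    for m
    using \<gamma> \<beta> by (intro qfin_eq_fock_coeff[OF fock]) (auto simp: Lam_def)
  ultimately show ?thesis
    by (simp add: qinf_def convergent_LIMSEQ_iff)
qed

lemma qinf_sigma_j_sigma_j:
  assumes "\<gamma> \<in> Lam d" "\<beta> \<in> Lam d" "j \<in> {1..d}"
  shows "qinf S \<Omega> (sigma_j j \<gamma>) (sigma_j j \<beta>) = qinf S \<Omega> \<gamma> \<beta>"
proof -
  have "(\<lambda>m. fock_coeff q (map (sigma_j j \<gamma>) [0..<Suc m]) (map (sigma_j j \<beta>) [0..<Suc m]))
      \<longlonglongrightarrow> qinf S \<Omega> (sigma_j j \<gamma>) (sigma_j j \<beta>)"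
    using assms by (intro LIMSEQ_Suc qinf_limit Lam_sigma_j)
  then have "(\<lambda>m. fock_coeff q (map \<gamma> [0..<m]) (map \<beta> [0..<m]))
      \<longlonglongrightarrow> qinf S \<Omega> (sigma_j j \<gamma>) (sigma_j j \<beta>)"
    by (simp only: map_sigma_j_upt fock_coeff_Cons_same)
  then show ?thesis
    using qinf_limit[OF assms(1,2)] by (rule LIMSEQ_unique)
qed

lemma qinf_sigma_j_left:
  assumes \<gamma>: "\<gamma> \<in> Lam d" and \<beta>: "\<beta> \<in> Lam d" and j: "j \<in> {1..d}" and c: "contains j \<beta>"
  shows "qinf S \<Omega> (sigma_j j \<gamma>) \<beta> = qj q j \<beta> * qinf S \<Omega> \<gamma> (remove_j j \<beta>)"
proof -
  have "(\<lambda>m. fock_coeff q (map (sigma_j j \<gamma>) [0..<Suc m]) (map \<beta> [0..<Suc m]))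
      \<longlonglongrightarrow> qinf S \<Omega> (sigma_j j \<gamma>) \<beta>"
    using assms by (intro LIMSEQ_Suc qinf_limit Lam_sigma_j)
  moreover have "(\<lambda>m. qj q j \<beta> * fock_coeff q (map \<gamma> [0..<m]) (map (remove_j j \<beta>) [0..<m]))
      \<longlonglongrightarrow> qj q j \<beta> * qinf S \<Omega> \<gamma> (remove_j j \<beta>)"
    using assms by (intro tendsto_mult_left qinf_limit Lam_remove_j)
  moreover have "eventually (\<lambda>m. qj q j \<beta> * fock_coeff q (map \<gamma> [0..<m]) (map (remove_j j \<beta>) [0..<m])
      = fock_coeff q (map (sigma_j j \<gamma>) [0..<Suc m]) (map \<beta> [0..<Suc m])) sequentially"
    by (rule eventually_sequentiallyI[of "first_pos j \<beta>"]) (simp only: fock_coeff_sigma_j_prefix[OF c])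
  ultimately show ?thesis
    by (blast intro: LIMSEQ_unique Lim_transform_eventually)
qed

lemma qinf_sigma_j_left_not_contains:
  assumes "\<gamma> \<in> Lam d" "\<beta> \<in> Lam d" "j \<in> {1..d}" "\<not> contains j \<beta>"
  shows "qinf S \<Omega> (sigma_j j \<gamma>) \<beta> = 0"
proof -
  have "(\<lambda>m. fock_coeff q (map (sigma_j j \<gamma>) [0..<Suc m]) (map \<beta> [0..<Suc m]))
      \<longlonglongrightarrow> qinf S \<Omega> (sigma_j j \<gamma>) \<beta>"
    using assms by (intro LIMSEQ_Suc qinf_limit Lam_sigma_j)
  moreover have "fock_coeff q (map (sigma_j j \<gamma>) [0..<Suc m]) (map \<beta> [0..<Suc m]) = 0" for m
    using assms(4) by (auto simp: map_sigma_j_upt contains_def simp del: upt_Suc)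
  ultimately show ?thesis
    by (simp add: LIMSEQ_const_iff)
qed

end

section \<open>The shift representation on \<open>H_\<alpha>\<close>\<close>

locale H_alpha_space = fock_space d q S \<Omega>
  for d :: nat and q :: "nat \<Rightarrow> nat \<Rightarrow> complex" and S :: "nat \<Rightarrow> 'f::chilbert \<Rightarrow> 'f" and \<Omega> :: 'f +
  fixes \<alpha> :: "nat \<Rightarrow> nat" and e :: "(nat \<Rightarrow> nat) \<Rightarrow> 'h::chilbert"
  assumes H: "is_H_alpha d S \<Omega> \<alpha> e"
begin

lemma cinner_basis:
  "\<beta> \<in> equiv_class d \<alpha> \<Longrightarrow> \<gamma> \<in> equiv_class d \<alpha> \<Longrightarrow> cinner (e \<beta>) (e \<gamma>) = qinf S \<Omega> \<gamma> \<beta>"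
  using H unfolding is_H_alpha_def by blast

lemma basis_dense: "closure (cspan (e ` equiv_class d \<alpha>)) = UNIV"
  using H unfolding is_H_alpha_def by blast

lemma equiv_class_Lam: "\<beta> \<in> equiv_class d \<alpha> \<Longrightarrow> \<beta> \<in> Lam d"
  by (simp add: equiv_class_def)

lemma shift_exists:
  assumes j: "j \<in> {1..d}"
  shows "\<exists>T. bounded_clinear T \<and> (\<forall>\<beta>\<in>equiv_class d \<alpha>. T (e \<beta>) = e (sigma_j j \<beta>))"
proof -
  have "cinner (e (sigma_j j \<beta>)) (e (sigma_j j \<gamma>)) = cinner (e \<beta>) (e \<gamma>)"
    if "\<beta> \<in> equiv_class d \<alpha>" "\<gamma> \<in> equiv_class d \<alpha>" for \<beta> \<gamma>
    using that j
    by (simp add: cinner_basis sigma_j_in_equiv_class qinf_sigma_j_sigma_j equiv_class_Lam)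
  then obtain T where "bounded_clinear T" "\<And>\<beta>. \<beta> \<in> equiv_class d \<alpha> \<Longrightarrow> T (e \<beta>) = e (sigma_j j \<beta>)"
    using isometric_extension[OF basis_dense, of "\<lambda>\<beta>. e (sigma_j j \<beta>)"] by blast
  then show ?thesis
    by blast
qed

lemma shift_unique:
  assumes "bounded_clinear T1" "\<forall>\<beta>\<in>equiv_class d \<alpha>. T1 (e \<beta>) = e (sigma_j j \<beta>)"
    and "bounded_clinear T2" "\<forall>\<beta>\<in>equiv_class d \<alpha>. T2 (e \<beta>) = e (sigma_j j \<beta>)"
  shows "T1 = T2"
  using assms by (intro bounded_clinear_eq_on_dense[OF _ _ basis_dense]) auto

definition shift :: "nat \<Rightarrow> 'h \<Rightarrow> 'h" where
  "shift j = (SOME T. bounded_clinear T \<and> (\<forall>\<beta>\<in>equiv_class d \<alpha>. T (e \<beta>) = e (sigma_j j \<beta>)))"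

lemma shift_spec:
  assumes "j \<in> {1..d}"
  shows bounded_clinear_shift: "bounded_clinear (shift j)"
    and shift_basis: "\<beta> \<in> equiv_class d \<alpha> \<Longrightarrow> shift j (e \<beta>) = e (sigma_j j \<beta>)"
  using someI_ex[OF shift_exists[OF assms]] unfolding shift_def by blast+

lemma cadjoint_shift_basis:
  assumes j: "j \<in> {1..d}" and \<beta>: "\<beta> \<in> equiv_class d \<alpha>"
  shows "cadjoint (shift j) (e \<beta>) =
    (if contains j \<beta> then scaleC (qj q j \<beta>) (e (remove_j j \<beta>)) else 0)"
proof (rule cinner_eq_on_dense[OF basis_dense])
  fix x assume "x \<in> e ` equiv_class d \<alpha>"
  then obtain \<gamma> where \<gamma>: "\<gamma> \<in> equiv_class d \<alpha>" and x: "x = e \<gamma>"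
    by blast
  have "cinner x (cadjoint (shift j) (e \<beta>)) = cinner (e (sigma_j j \<gamma>)) (e \<beta>)"
    by (simp add: x cinner_cadjoint[OF bounded_clinear_shift[OF j], symmetric] shift_basis[OF j \<gamma>])
  also have "\<dots> = cnj (qinf S \<Omega> (sigma_j j \<gamma>) \<beta>)"
    using j \<beta> \<gamma> by (subst cinner_commute) (simp add: cinner_basis sigma_j_in_equiv_class)
  also have "\<dots> = cinner x (if contains j \<beta> then scaleC (qj q j \<beta>) (e (remove_j j \<beta>)) else 0)"
  proof (cases "contains j \<beta>")
    case True
    have "cnj (qinf S \<Omega> (sigma_j j \<gamma>) \<beta>) = cnj (qj q j \<beta>) * cnj (cinner (e (remove_j j \<beta>)) (e \<gamma>))"
      using j \<beta> \<gamma> True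
      by (simp add: qinf_sigma_j_left equiv_class_Lam cinner_basis remove_j_in_equiv_class)
    then show ?thesis
      using True by (simp add: x cinner_scaleC_right flip: cinner_commute)
  qed (use j \<beta> \<gamma> in \<open>simp add: qinf_sigma_j_left_not_contains equiv_class_Lam\<close>)
  finally show "cinner x (cadjoint (shift j) (e \<beta>))
      = cinner x (if contains j \<beta> then scaleC (qj q j \<beta>) (e (remove_j j \<beta>)) else 0)" .
qed

lemma cadjoint_shift_shift:
  assumes j: "j \<in> {1..d}"
  shows "cadjoint (shift j) \<circ> shift j = id"
proof (rule bounded_clinear_eq_on_dense[OF _ bounded_clinear_id basis_dense])
  show "bounded_clinear (cadjoint (shift j) \<circ> shift j)"
    using j by (intro bounded_clinear_compose bounded_clinear_cadjoint bounded_clinear_shift)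
  fix x assume "x \<in> e ` equiv_class d \<alpha>"
  then show "(cadjoint (shift j) \<circ> shift j) x = id x"
    using j by (auto simp: shift_basis cadjoint_shift_basis sigma_j_in_equiv_class
        contains_sigma_j_self qj_sigma_j_self remove_j_sigma_j_self scaleC_one)
qed

lemma cadjoint_shift_commute:
  assumes i: "i \<in> {1..d}" and j: "j \<in> {1..d}" and ij: "i \<noteq> j"
  shows "cadjoint (shift i) \<circ> shift j = (\<lambda>x. scaleC (q i j) (shift j (cadjoint (shift i) x)))"
proof (rule bounded_clinear_eq_on_dense[OF _ _ basis_dense])
  show "bounded_clinear (cadjoint (shift i) \<circ> shift j)"
    using i j by (intro bounded_clinear_compose bounded_clinear_cadjoint bounded_clinear_shift)
  show "bounded_clinear (\<lambda>x. scaleC (q i j) (shift j (cadjoint (shift i) x)))"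
    using bounded_clinear_scaleC_compose[OF bounded_clinear_compose[OF bounded_clinear_shift[OF j]
        bounded_clinear_cadjoint[OF bounded_clinear_shift[OF i]]]]
    by (simp add: comp_def)
  fix x assume "x \<in> e ` equiv_class d \<alpha>"
  then obtain \<beta> where \<beta>: "\<beta> \<in> equiv_class d \<alpha>" and x: "x = e \<beta>"
    by blast
  show "(cadjoint (shift i) \<circ> shift j) x = scaleC (q i j) (shift j (cadjoint (shift i) x))"
  proof (cases "contains i \<beta>")
    case True
    then show ?thesis
      using i j ij \<beta>
      by (simp add: x shift_basis cadjoint_shift_basis sigma_j_in_equiv_class remove_j_in_equiv_class
          contains_sigma_j qj_sigma_j remove_j_sigma_j scaleC_scaleC
          bounded_clinear_scaleC[OF bounded_clinear_shift[OF j]])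
  next
    case False
    then show ?thesis
      using i j ij \<beta>
      by (simp add: x shift_basis cadjoint_shift_basis sigma_j_in_equiv_class contains_sigma_j
          bounded_clinear_zero[OF bounded_clinear_shift[OF j]])
  qed
qed

lemma W_rep_shift: "W_rep d q shift"
  unfolding W_rep_def
  using bounded_clinear_shift cadjoint_shift_shift cadjoint_shift_commute by blast

end

theorem mainTheorem3:
  fixes d :: nat and q :: "nat \<Rightarrow> nat \<Rightarrow> complex"
    and S :: "nat \<Rightarrow> 'f::chilbert \<Rightarrow> 'f" and \<Omega> :: 'f
    and \<alpha> :: "nat \<Rightarrow> nat" and e :: "(nat \<Rightarrow> nat) \<Rightarrow> 'h::chilbert"
  assumes d2: "d \<ge> 2"
    and q_small: "\<forall>i\<in>{1..d}. \<forall>j\<in>{1..d}. i \<noteq> j \<longrightarrow> norm (q i j) < 1"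
    and q_herm: "\<forall>i\<in>{1..d}. \<forall>j\<in>{1..d}. i \<noteq> j \<longrightarrow> q i j = cnj (q j i)"
    and fock: "fock_rep d q S \<Omega>"
    and alpha: "\<alpha> \<in> Lam d"
    and H: "is_H_alpha d S \<Omega> \<alpha> e"
  shows "(\<forall>j\<in>{1..d}. \<exists>!T. bounded_clinear T \<and>
            (\<forall>\<beta>\<in>equiv_class d \<alpha>. T (e \<beta>) = e (sigma_j j \<beta>))) \<and>
         (\<exists>P. (\<forall>j\<in>{1..d}. bounded_clinear (P j) \<and>
              (\<forall>\<beta>\<in>equiv_class d \<alpha>. P j (e \<beta>) = e (sigma_j j \<beta>)) \<and>
              (\<forall>\<beta>\<in>equiv_class d \<alpha>. cadjoint (P j) (e \<beta>) =
                  (if contains j \<beta> then scaleC (qj q j \<beta>) (e (remove_j j \<beta>)) else 0))) \<and>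
            W_rep d q P)"
proof -
  interpret H_alpha_space d q S \<Omega> \<alpha> e
    by unfold_locales (fact fock q_small H)+
  have "\<forall>j\<in>{1..d}. \<exists>!T. bounded_clinear T \<and> (\<forall>\<beta>\<in>equiv_class d \<alpha>. T (e \<beta>) = e (sigma_j j \<beta>))"
    using shift_exists shift_unique by (blast intro: ex_ex1I)
  moreover have "\<forall>j\<in>{1..d}. bounded_clinear (shift j) \<and>
      (\<forall>\<beta>\<in>equiv_class d \<alpha>. shift j (e \<beta>) = e (sigma_j j \<beta>)) \<and>
      (\<forall>\<beta>\<in>equiv_class d \<alpha>. cadjoint (shift j) (e \<beta>) =
        (if contains j \<beta> then scaleC (qj q j \<beta>) (e (remove_j j \<beta>)) else 0))"
    using bounded_clinear_shift shift_basis cadjoint_shift_basis by blast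
  ultimately show ?thesis
    using W_rep_shift by blast
qed

end
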